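(* Let $n\ge 1$ and $m\ge 1$ be integers and let $H_m(\mathbb B)$ be the analytic functional Hilbert space on the open unit ball $\mathbb B\subset\mathbb C^n$ with reproducing kernel $K_m(z,w)=(1-\langle z,w\rangle)^{-m}$. Let $T\in L(H_m(\mathbb B))$ satisfy \[ M^{\prime *}_zTM^\prime_z = P_{{\rm Im}M^*_z}\Big(\oplus \sum^{m-1}_{j=0}(-1)^j\binom{m}{j+1}\sigma^j_{M_z}(T)\Big)P_{{\rm Im}M^*_z}. \] Then for every $k\in\mathbb Z$ the operator $T_k=\frac{1}{2\pi}\int_0^{2\pi}e^{-ikt}U(t)TU(t)^*\,dt$ satisfies the same identity, i.e. \[ M^{\prime *}_zT_kM^\prime_z = P_{{\rm Im}M^*_z}\Big(\oplus \sum^{m-1}_{j=0}(-1)^j\binom{m}{j+1}\sigma^j_{M_z}(T_k)\Big)P_{{\rm Im}M^*_z}. \]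
   Context: $H_m(\mathbb B)=\{f=\sum_{\alpha\in\mathbb N^n}f_\alpha z^\alpha\in\mathcal O(\mathbb B):\ \|f\|^2=\sum_\alpha |f_\alpha|^2/\rho_m(\alpha)<\infty\}$ with $\rho_m(\alpha)=\frac{(m+|\alpha|-1)!}{\alpha!(m-1)!}$. Let $\mathbb H_k$ denote the space of homogeneous polynomials of degree $k$, so $H_m(\mathbb B)$ is the orthogonal sum of the $\mathbb H_k$, and every $f$ has homogeneous expansion $f=\sum_k f_k$, $f_k\in\mathbb H_k$. $M_z:H_m(\mathbb B)^n\to H_m(\mathbb B)$, $(f_i)\mapsto\sum_i z_if_i$, is the row multiplication operator (it has closed range), $M_z^*:H_m(\mathbb B)\to H_m(\mathbb B)^n$, $f\mapsto (M_{z_i}^*f)_i$, is its adjoint, and $P_{{\rm Im}M_z^*}$ is the orthogonal projection of $H_m(\mathbb B)^n$ onto the closed range of $M_z^*$. Let $\delta\in L(H_m(\mathbb B))$ be the diagonal operator $\delta(\sum_k f_k)=f_0+\sum_{k\ge1}\frac{m+k-1}{k}f_k$, and define $M_z'=\delta M_z:H_m(\mathbb B)^n\to H_m(\mathbb B)$, with adjoint $M_z'^*$. For $X\in L(H_m(\mathbb B))$, $\sigma_{M_z}(X)=\sum_{i=1}^n M_{z_i}XM_{z_i}^*$, $\sigma^j_{M_z}$ is its $j$-th iterate ($\sigma^0_{M_z}(X)=X$), and $\oplus X$ denotes $X\oplus\cdots\oplus X$ ($n$ copies) on $H_m(\mathbb B)^n$. $U(t)\in L(H_m(\mathbb B))$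 is the unitary $(U(t)f)(z)=f(e^{it}z)$, $t\in\mathbb R$; the integral defining $T_k$ is a weak operator integral: $\langle T_kf,g\rangle=\frac1{2\pi}\int_0^{2\pi}e^{-ikt}\langle U(t)TU(t)^*f,g\rangle dt$. *)

theory Defs
  imports "HOL-Analysis.Analysis"
begin

text \<open>Concrete model of H_m(B): an element f = sum f_alpha z^alpha is represented by its
  coefficient function on multi-indices alpha in N^n (functions nat => nat vanishing at
  indices >= n); coefficients outside that set are 0.\<close>

type_synonym mi = "nat \<Rightarrow> nat"
type_synonym hel = "mi \<Rightarrow> complex"
type_synonym hvec = "nat \<Rightarrow> hel"

definition MI :: "nat \<Rightarrow> mi set" where
  "MI n = {\<alpha>. \<forall>i\<ge>n. \<alpha> i = 0}"

definition mlen :: "nat \<Rightarrow> mi \<Rightarrow> nat" where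
  "mlen n \<alpha> = (\<Sum>i<n. \<alpha> i)"

definition rho :: "nat \<Rightarrow> nat \<Rightarrow> mi \<Rightarrow> real" where
  "rho n m \<alpha> = fact (m + mlen n \<alpha> - 1) / ((\<Prod>i<n. fact (\<alpha> i)) * fact (m - 1))"

definition Hm :: "nat \<Rightarrow> nat \<Rightarrow> hel set" where
  "Hm n m = {f. (\<forall>\<alpha>. \<alpha> \<notin> MI n \<longrightarrow> f \<alpha> = 0) \<and>
                (\<lambda>\<alpha>. (cmod (f \<alpha>))\<^sup>2 / rho n m \<alpha>) summable_on MI n}"

definition ipH :: "nat \<Rightarrow> nat \<Rightarrow> hel \<Rightarrow> hel \<Rightarrow> complex" where
  "ipH n m f g = (\<Sum>\<^sub>\<infinity>\<alpha>\<in>MI n. f \<alpha> * cnj (g \<alpha>) / complex_of_real (rho n m \<alpha>))"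

definition Hmn :: "nat \<Rightarrow> nat \<Rightarrow> hvec set" where
  "Hmn n m = {F. (\<forall>i\<ge>n. F i = (\<lambda>_. 0)) \<and> (\<forall>i<n. F i \<in> Hm n m)}"

definition ipHn :: "nat \<Rightarrow> nat \<Rightarrow> hvec \<Rightarrow> hvec \<Rightarrow> complex" where
  "ipHn n m F G = (\<Sum>i<n. ipH n m (F i) (G i))"

definition bounded_op :: "nat \<Rightarrow> nat \<Rightarrow> (hel \<Rightarrow> hel) \<Rightarrow> bool" where
  "bounded_op n m T \<longleftrightarrow>
     (\<forall>f\<in>Hm n m. T f \<in> Hm n m) \<and>
     (\<forall>f\<in>Hm n m. \<forall>g\<in>Hm n m. T (\<lambda>\<alpha>. f \<alpha> + g \<alpha>) = (\<lambda>\<alpha>. T f \<alpha> + T g \<alpha>)) \<and>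
     (\<forall>c. \<forall>f\<in>Hm n m. T (\<lambda>\<alpha>. c * f \<alpha>) = (\<lambda>\<alpha>. c * T f \<alpha>)) \<and>
     (\<exists>C. \<forall>f\<in>Hm n m. Re (ipH n m (T f) (T f)) \<le> C * Re (ipH n m f f))"

definition adj :: "'a set \<Rightarrow> ('a \<Rightarrow> 'a \<Rightarrow> complex) \<Rightarrow> 'b set \<Rightarrow> ('b \<Rightarrow> 'b \<Rightarrow> complex)
                    \<Rightarrow> ('a \<Rightarrow> 'b) \<Rightarrow> ('b \<Rightarrow> 'a)" where
  "adj S1 ip1 S2 ip2 A = (SOME B. (\<forall>y\<in>S2. B y \<in> S1) \<and>
                                  (\<forall>x\<in>S1. \<forall>y\<in>S2. ip2 (A x) y = ip1 x (B y)))"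

text \<open>Multiplication by z_i: (z_i f)_alpha = f_(alpha - e_i) if alpha_i > 0, else 0.\<close>
definition Mzi :: "nat \<Rightarrow> hel \<Rightarrow> hel" where
  "Mzi i f = (\<lambda>\<alpha>. if 0 < \<alpha> i then f (\<alpha>(i := \<alpha> i - 1)) else 0)"

definition Mzi_adj :: "nat \<Rightarrow> nat \<Rightarrow> nat \<Rightarrow> hel \<Rightarrow> hel" where
  "Mzi_adj n m i = adj (Hm n m) (ipH n m) (Hm n m) (ipH n m) (Mzi i)"

definition Mz :: "nat \<Rightarrow> hvec \<Rightarrow> hel" where
  "Mz n F = (\<lambda>\<alpha>. \<Sum>i<n. Mzi i (F i) \<alpha>)"

definition Mz_adj :: "nat \<Rightarrow> nat \<Rightarrow> hel \<Rightarrow> hvec" where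
  "Mz_adj n m f = (\<lambda>i. if i < n then Mzi_adj n m i f else (\<lambda>_. 0))"

definition delta :: "nat \<Rightarrow> nat \<Rightarrow> hel \<Rightarrow> hel" where
  "delta n m f = (\<lambda>\<alpha>. if mlen n \<alpha> = 0 then f \<alpha>
        else (of_nat (m + mlen n \<alpha> - 1) / of_nat (mlen n \<alpha>)) * f \<alpha>)"

definition Mz' :: "nat \<Rightarrow> nat \<Rightarrow> hvec \<Rightarrow> hel" where
  "Mz' n m F = delta n m (Mz n F)"

definition Mz'_adj :: "nat \<Rightarrow> nat \<Rightarrow> hel \<Rightarrow> hvec" where
  "Mz'_adj n m = adj (Hmn n m) (ipHn n m) (Hm n m) (ipH n m) (Mz' n m)"

definition ImMz_adj :: "nat \<Rightarrow> nat \<Rightarrow> hvec set" where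
  "ImMz_adj n m = Mz_adj n m ` Hm n m"

definition projIm :: "nat \<Rightarrow> nat \<Rightarrow> hvec \<Rightarrow> hvec" where
  "projIm n m F = (SOME G. G \<in> ImMz_adj n m \<and>
      (\<forall>K\<in>ImMz_adj n m. ipHn n m (\<lambda>i \<alpha>. F i \<alpha> - G i \<alpha>) K = 0))"

definition sigma :: "nat \<Rightarrow> nat \<Rightarrow> (hel \<Rightarrow> hel) \<Rightarrow> (hel \<Rightarrow> hel)" where
  "sigma n m X = (\<lambda>f \<alpha>. \<Sum>i<n. Mzi i (X (Mzi_adj n m i f)) \<alpha>)"

definition oplus :: "nat \<Rightarrow> (hel \<Rightarrow> hel) \<Rightarrow> hvec \<Rightarrow> hvec" where
  "oplus n X = (\<lambda>F i. if i < n then X (F i) else (\<lambda>_. 0))"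

definition combo :: "nat \<Rightarrow> nat \<Rightarrow> (hel \<Rightarrow> hel) \<Rightarrow> (hel \<Rightarrow> hel)" where
  "combo n m X = (\<lambda>f \<alpha>. \<Sum>j<m. (-1) ^ j * of_nat (m choose (j + 1)) * ((sigma n m ^^ j) X) f \<alpha>)"

text \<open>(U(t) f)(z) = f(e^{it} z), i.e. coefficients multiplied by e^{it|alpha|}.\<close>
definition U :: "nat \<Rightarrow> real \<Rightarrow> hel \<Rightarrow> hel" where
  "U n t f = (\<lambda>\<alpha>. exp (\<i> * of_real t * of_nat (mlen n \<alpha>)) * f \<alpha>)"

definition U_adj :: "nat \<Rightarrow> nat \<Rightarrow> real \<Rightarrow> hel \<Rightarrow> hel" where
  "U_adj n m t = adj (Hm n m) (ipH n m) (Hm n m) (ipH n m) (U n t)"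

text \<open>T_k as a weak operator integral.\<close>
definition Tk :: "nat \<Rightarrow> nat \<Rightarrow> (hel \<Rightarrow> hel) \<Rightarrow> int \<Rightarrow> hel \<Rightarrow> hel" where
  "Tk n m T k f = (SOME h. h \<in> Hm n m \<and> (\<forall>g\<in>Hm n m.
      ipH n m h g = complex_of_real (1 / (2 * pi)) *
        integral {0..2 * pi} (\<lambda>t. exp (- (\<i> * of_int k * of_real t)) *
                                   ipH n m (U n t (T (U_adj n m t f))) g)))"

end

theory Submission
  imports Defs
begin

text \<open>With P = M_z^* \<delta> M_z the orthogonal projection onto Im M_z^*, the hypothesis is
  equivalent to its weak form: for all F, G in H_m(B)^n,
  <T M'_z F, M'_z G> = \<Sum>_i \<Sum>_j (-1)^j binom(m, j+1) <\<sigma>^j(T) (P F)_i, (P G)_i>.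
  Since M_{z_i} U(t) = e^{-it} U(t) M_{z_i} while \<delta> and P commute with U(t), and
  \<sigma>(U(t) X U(t)^*) = U(t) \<sigma>(X) U(t)^*, the weak form passes from T to U(t) T U(t)^*
  for every t. Both sides are linear in the operator and continuous in t, so integrating
  against e^{-ikt} / 2\<pi> gives the weak form for T_k, which exists by Riesz representation.\<close>

section \<open>The space H_m(B) and its inner product\<close>

lemma rho_pos: "0 < rho n m \<alpha>"
  unfolding rho_def by (intro divide_pos_pos mult_pos_pos prod_pos) auto

lemma rho_neq_0 [simp]: "rho n m \<alpha> \<noteq> 0"
  using rho_pos[of n m \<alpha>] by simp

definition sqnorm :: "nat \<Rightarrow> nat \<Rightarrow> hel \<Rightarrow> real" where
  "sqnorm n m f = (\<Sum>\<^sub>\<infinity>\<alpha>\<in>MI n. (cmod (f \<alpha>))\<^sup>2 / rho n m \<alpha>)"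

lemma Hm_vanishes: "f \<in> Hm n m \<Longrightarrow> \<alpha> \<notin> MI n \<Longrightarrow> f \<alpha> = 0"
  by (simp add: Hm_def)

lemma Hm_summable: "f \<in> Hm n m \<Longrightarrow> (\<lambda>\<alpha>. (cmod (f \<alpha>))\<^sup>2 / rho n m \<alpha>) summable_on MI n"
  by (simp add: Hm_def)

lemma Hm_zero: "(\<lambda>_. 0) \<in> Hm n m"
  by (simp add: Hm_def)

lemma Hm_mult_bounded:
  assumes f: "f \<in> Hm n m" and B: "\<And>\<alpha>. cmod (d \<alpha>) \<le> B"
  shows "(\<lambda>\<alpha>. d \<alpha> * f \<alpha>) \<in> Hm n m"
proof -
  have "(\<lambda>\<alpha>. B\<^sup>2 * ((cmod (f \<alpha>))\<^sup>2 / rho n m \<alpha>)) summable_on MI n"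
    using Hm_summable[OF f] by (rule summable_on_cmult_right)
  moreover have "(cmod (d \<alpha> * f \<alpha>))\<^sup>2 / rho n m \<alpha> \<le> B\<^sup>2 * ((cmod (f \<alpha>))\<^sup>2 / rho n m \<alpha>)" for \<alpha>
  proof -
    have "(cmod (d \<alpha>))\<^sup>2 \<le> B\<^sup>2" using B[of \<alpha>] by (intro power_mono) auto
    hence "(cmod (d \<alpha>))\<^sup>2 * (cmod (f \<alpha>))\<^sup>2 \<le> B\<^sup>2 * (cmod (f \<alpha>))\<^sup>2"
      by (intro mult_right_mono) auto
    thus ?thesis using rho_pos[of n m \<alpha>]
      by (simp add: norm_mult power_mult_distrib divide_right_mono)
  qed
  ultimately have "(\<lambda>\<alpha>. (cmod (d \<alpha> * f \<alpha>))\<^sup>2 / rho n m \<alpha>) summable_on MI n"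
    by (rule summable_on_comparison_test) (auto intro!: divide_nonneg_pos rho_pos)
  thus ?thesis using f by (auto simp: Hm_def)
qed

lemma Hm_scale: "f \<in> Hm n m \<Longrightarrow> (\<lambda>\<alpha>. c * f \<alpha>) \<in> Hm n m"
  using Hm_mult_bounded[of f n m "\<lambda>_. c" "cmod c"] by simp

lemma Hm_add:
  assumes f: "f \<in> Hm n m" and g: "g \<in> Hm n m"
  shows "(\<lambda>\<alpha>. f \<alpha> + g \<alpha>) \<in> Hm n m"
proof -
  have "(\<lambda>\<alpha>. 2 * ((cmod (f \<alpha>))\<^sup>2 / rho n m \<alpha>) + 2 * ((cmod (g \<alpha>))\<^sup>2 / rho n m \<alpha>)) summable_on MI n"
    using Hm_summable[OF f] Hm_summable[OF g] by (intro summable_on_add summable_on_cmult_right)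
  moreover have "(cmod (f \<alpha> + g \<alpha>))\<^sup>2 / rho n m \<alpha> \<le>
     2 * ((cmod (f \<alpha>))\<^sup>2 / rho n m \<alpha>) + 2 * ((cmod (g \<alpha>))\<^sup>2 / rho n m \<alpha>)" for \<alpha>
  proof -
    have "(cmod (f \<alpha> + g \<alpha>))\<^sup>2 \<le> (cmod (f \<alpha>) + cmod (g \<alpha>))\<^sup>2"
      by (intro power_mono norm_triangle_ineq) auto
    also have "\<dots> \<le> 2 * (cmod (f \<alpha>))\<^sup>2 + 2 * (cmod (g \<alpha>))\<^sup>2"
      using zero_le_power2[of "cmod (f \<alpha>) - cmod (g \<alpha>)"] by (simp add: power2_eq_square algebra_simps)
    finally show ?thesis using rho_pos[of n m \<alpha>]
      by (simp add: add_divide_distrib[symmetric] divide_right_mono)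
  qed
  ultimately have "(\<lambda>\<alpha>. (cmod (f \<alpha> + g \<alpha>))\<^sup>2 / rho n m \<alpha>) summable_on MI n"
    by (rule summable_on_comparison_test) (auto intro!: divide_nonneg_pos rho_pos)
  thus ?thesis using f g by (auto simp: Hm_def)
qed

lemma Hm_diff: "f \<in> Hm n m \<Longrightarrow> g \<in> Hm n m \<Longrightarrow> (\<lambda>\<alpha>. f \<alpha> - g \<alpha>) \<in> Hm n m"
  using Hm_add[of f n m "\<lambda>\<alpha>. (-1) * g \<alpha>"] Hm_scale[of g n m "-1"] by simp

lemma Hm_sum:
  "finite I \<Longrightarrow> (\<And>i. i \<in> I \<Longrightarrow> F i \<in> Hm n m) \<Longrightarrow> (\<lambda>\<alpha>. \<Sum>i\<in>I. F i \<alpha>) \<in> Hm n m"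
  by (induction I rule: finite_induct) (auto simp: Hm_zero intro!: Hm_add)

lemma ipH_abs_summable:
  assumes f: "f \<in> Hm n m" and g: "g \<in> Hm n m"
  shows "(\<lambda>\<alpha>. norm (f \<alpha> * cnj (g \<alpha>) / complex_of_real (rho n m \<alpha>))) summable_on MI n"
proof -
  have "(\<lambda>\<alpha>. (cmod (f \<alpha>))\<^sup>2 / rho n m \<alpha> + (cmod (g \<alpha>))\<^sup>2 / rho n m \<alpha>) summable_on MI n"
    using Hm_summable[OF f] Hm_summable[OF g] by (intro summable_on_add)
  moreover have "norm (f \<alpha> * cnj (g \<alpha>) / complex_of_real (rho n m \<alpha>)) \<le>
      (cmod (f \<alpha>))\<^sup>2 / rho n m \<alpha> + (cmod (g \<alpha>))\<^sup>2 / rho n m \<alpha>" for \<alpha>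
  proof -
    have "2 * cmod (f \<alpha>) * cmod (g \<alpha>) \<le> (cmod (f \<alpha>))\<^sup>2 + (cmod (g \<alpha>))\<^sup>2"
      by (rule sum_squares_bound)
    hence "cmod (f \<alpha>) * cmod (g \<alpha>) \<le> (cmod (f \<alpha>))\<^sup>2 + (cmod (g \<alpha>))\<^sup>2"
      using mult_nonneg_nonneg[OF norm_ge_zero norm_ge_zero, of "f \<alpha>" "g \<alpha>"] by linarith
    thus ?thesis using rho_pos[of n m \<alpha>]
      by (simp add: norm_mult norm_divide add_divide_distrib[symmetric] divide_right_mono)
  qed
  ultimately show ?thesis by (rule summable_on_comparison_test) auto
qed

lemma ipH_summable:
  "f \<in> Hm n m \<Longrightarrow> g \<in> Hm n m \<Longrightarrow>
     (\<lambda>\<alpha>. f \<alpha> * cnj (g \<alpha>) / complex_of_real (rho n m \<alpha>)) summable_on MI n"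
  by (rule abs_summable_summable) (rule ipH_abs_summable)

lemma ipH_add_left:
  assumes "f \<in> Hm n m" "g \<in> Hm n m" "h \<in> Hm n m"
  shows "ipH n m (\<lambda>\<alpha>. f \<alpha> + g \<alpha>) h = ipH n m f h + ipH n m g h"
  unfolding ipH_def distrib_right add_divide_distrib
  by (rule infsum_add) (auto intro!: ipH_summable assms)

lemma ipH_scale_left: "ipH n m (\<lambda>\<alpha>. c * f \<alpha>) h = c * ipH n m f h"
  unfolding ipH_def mult.assoc times_divide_eq_right[symmetric] by (rule infsum_cmult_right')

lemma ipH_cnj: "ipH n m g f = cnj (ipH n m f g)"
proof -
  have e: "(\<lambda>\<alpha>. g \<alpha> * cnj (f \<alpha>) / complex_of_real (rho n m \<alpha>)) =
    (\<lambda>\<alpha>. cnj (f \<alpha> * cnj (g \<alpha>) / complex_of_real (rho n m \<alpha>)))"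
    by (simp add: mult.commute)
  show ?thesis unfolding ipH_def e infsum_cnj ..
qed

lemma ipH_mult_left: "ipH n m (\<lambda>\<alpha>. d \<alpha> * f \<alpha>) g = ipH n m f (\<lambda>\<alpha>. cnj (d \<alpha>) * g \<alpha>)"
  unfolding ipH_def by (simp add: mult.commute mult.left_commute)

lemma sqnorm_nonneg: "0 \<le> sqnorm n m f"
  unfolding sqnorm_def by (intro infsum_nonneg divide_nonneg_pos rho_pos) auto

lemma ipH_self:
  assumes "f \<in> Hm n m" shows "ipH n m f f = complex_of_real (sqnorm n m f)"
proof -
  have "ipH n m f f = (\<Sum>\<^sub>\<infinity>\<alpha>\<in>MI n. complex_of_real ((cmod (f \<alpha>))\<^sup>2 / rho n m \<alpha>))"
    unfolding ipH_def by (intro infsum_cong) (simp only: complex_norm_square[symmetric] of_real_divide)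
  also have "\<dots> = complex_of_real (sqnorm n m f)" unfolding sqnorm_def
    by (rule infsumI, rule has_sum_of_real, rule has_sum_infsum, rule Hm_summable[OF assms])
  finally show ?thesis .
qed

lemma sqnorm_eq_0D:
  assumes f: "f \<in> Hm n m" and z: "sqnorm n m f = 0"
  shows "f = (\<lambda>_. 0)"
proof
  fix \<alpha> show "f \<alpha> = 0"
  proof (cases "\<alpha> \<in> MI n")
    case True
    have "(cmod (f \<alpha>))\<^sup>2 / rho n m \<alpha> = 0"
      by (rule nonneg_infsum_le_0D[OF _ Hm_summable[OF f] _ True])
        (use z in \<open>auto simp: sqnorm_def intro!: divide_nonneg_pos rho_pos\<close>)
    thus ?thesis using rho_pos[of n m \<alpha>] by simp
  qed (use Hm_vanishes[OF f] in auto)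
qed

lemma ipH_zero_left [simp]: "ipH n m (\<lambda>_. 0) g = 0"
  and ipH_zero_right [simp]: "ipH n m g (\<lambda>_. 0) = 0"
  unfolding ipH_def by simp_all

lemma ipH_add_right:
  assumes "f \<in> Hm n m" "g \<in> Hm n m" "h \<in> Hm n m"
  shows "ipH n m h (\<lambda>\<alpha>. f \<alpha> + g \<alpha>) = ipH n m h f + ipH n m h g"
  using ipH_add_left[OF assms] ipH_cnj[of n m h] by simp

lemma ipH_scale_right: "ipH n m h (\<lambda>\<alpha>. c * f \<alpha>) = cnj c * ipH n m h f"
  using ipH_scale_left[of n m c f h] ipH_cnj[of n m h] by simp

lemma ipH_diff_left:
  assumes "f \<in> Hm n m" "g \<in> Hm n m" "h \<in> Hm n m"
  shows "ipH n m (\<lambda>\<alpha>. f \<alpha> - g \<alpha>) h = ipH n m f h - ipH n m g h"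
  using ipH_add_left[OF assms(1) Hm_scale[OF assms(2), of "-1"] assms(3)]
    ipH_scale_left[of n m "-1" g h] by simp

lemma ipH_diff_right:
  assumes "f \<in> Hm n m" "g \<in> Hm n m" "h \<in> Hm n m"
  shows "ipH n m h (\<lambda>\<alpha>. f \<alpha> - g \<alpha>) = ipH n m h f - ipH n m h g"
  using ipH_diff_left[OF assms] ipH_cnj[of n m h] by simp

lemma ipH_sum_left:
  assumes "finite I" "\<And>i. i \<in> I \<Longrightarrow> F i \<in> Hm n m" "h \<in> Hm n m"
  shows "ipH n m (\<lambda>\<alpha>. \<Sum>i\<in>I. F i \<alpha>) h = (\<Sum>i\<in>I. ipH n m (F i) h)"
  using assms
proof (induction I rule: finite_induct)
  case (insert x I)
  have "ipH n m (\<lambda>\<alpha>. F x \<alpha> + (\<Sum>i\<in>I. F i \<alpha>)) h = ipH n m (F x) h + ipH n m (\<lambda>\<alpha>. \<Sum>i\<in>I. F i \<alpha>) h"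
    by (rule ipH_add_left) (use insert in \<open>auto intro!: Hm_sum\<close>)
  thus ?case using insert by simp
qed simp

lemma ipH_unimodular:
  assumes "cmod e = 1"
  shows "ipH n m (\<lambda>\<alpha>. e * p \<alpha>) (\<lambda>\<alpha>. e * q \<alpha>) = ipH n m p q"
proof -
  have "e * cnj e = 1" using complex_norm_square[of e] assms by simp
  thus ?thesis by (simp add: ipH_scale_left ipH_scale_right mult.assoc[symmetric])
qed

lemma Hm_eqI:
  assumes u: "u \<in> Hm n m" and v: "v \<in> Hm n m"
    and eq: "\<And>x. x \<in> Hm n m \<Longrightarrow> ipH n m x u = ipH n m x v"
  shows "u = v"
proof -
  let ?d = "\<lambda>\<alpha>. u \<alpha> - v \<alpha>"
  have d: "?d \<in> Hm n m" by (rule Hm_diff[OF u v])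
  have "complex_of_real (sqnorm n m ?d) = ipH n m ?d u - ipH n m ?d v"
    unfolding ipH_self[OF d, symmetric] by (rule ipH_diff_right[OF u v d])
  hence "?d = (\<lambda>_. 0)" using eq[OF d] sqnorm_eq_0D[OF d] by simp
  thus ?thesis by (simp add: fun_eq_iff)
qed

lemma ipH_le_weighted:
  assumes f: "f \<in> Hm n m" and g: "g \<in> Hm n m" and u: "0 < u"
  shows "cmod (ipH n m f g) \<le> (u * sqnorm n m f + sqnorm n m g / u) / 2"
proof -
  let ?w1 = "\<lambda>\<alpha>. (cmod (f \<alpha>))\<^sup>2 / rho n m \<alpha>"
  let ?w2 = "\<lambda>\<alpha>. (cmod (g \<alpha>))\<^sup>2 / rho n m \<alpha>"
  have s: "(\<lambda>\<alpha>. (u/2) * ?w1 \<alpha> + (1/(2*u)) * ?w2 \<alpha>) summable_on MI n"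
    using Hm_summable[OF f] Hm_summable[OF g] by (intro summable_on_add summable_on_cmult_right)
  have "cmod (ipH n m f g) \<le> (\<Sum>\<^sub>\<infinity>\<alpha>\<in>MI n. norm (f \<alpha> * cnj (g \<alpha>) / complex_of_real (rho n m \<alpha>)))"
    unfolding ipH_def by (rule norm_infsum_bound) (rule ipH_abs_summable[OF f g])
  also have "\<dots> \<le> (\<Sum>\<^sub>\<infinity>\<alpha>\<in>MI n. (u/2) * ?w1 \<alpha> + (1/(2*u)) * ?w2 \<alpha>)"
  proof (rule infsum_mono[OF ipH_abs_summable[OF f g] s])
    fix \<alpha>
    have r: "0 < rho n m \<alpha>" by (rule rho_pos)
    define x y where "x = cmod (f \<alpha>)" and "y = cmod (g \<alpha>)"
    have "(u * x - y)\<^sup>2 = u * (u * x\<^sup>2 + y\<^sup>2 / u - 2 * x * y)"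
      using u by (simp add: field_simps power2_eq_square)
    hence "0 \<le> u * (u * x\<^sup>2 + y\<^sup>2 / u - 2 * x * y)" by (metis zero_le_power2)
    hence "2 * cmod (f \<alpha>) * cmod (g \<alpha>) \<le> u * (cmod (f \<alpha>))\<^sup>2 + (cmod (g \<alpha>))\<^sup>2 / u"
      using u by (simp add: zero_le_mult_iff x_def y_def)
    hence "(2 * cmod (f \<alpha>) * cmod (g \<alpha>)) / rho n m \<alpha> \<le> (u * (cmod (f \<alpha>))\<^sup>2 + (cmod (g \<alpha>))\<^sup>2 / u) / rho n m \<alpha>"
      using r by (intro divide_right_mono) auto
    thus "norm (f \<alpha> * cnj (g \<alpha>) / complex_of_real (rho n m \<alpha>)) \<le> (u/2) * ?w1 \<alpha> + (1/(2*u)) * ?w2 \<alpha>"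
      using r by (simp add: norm_mult norm_divide field_simps)
  qed
  also have "\<dots> = (u/2) * sqnorm n m f + (1/(2*u)) * sqnorm n m g"
    unfolding sqnorm_def
    by (subst infsum_add)
      (auto intro!: summable_on_cmult_right Hm_summable[OF f] Hm_summable[OF g] simp only: infsum_cmult_right')
  also have "\<dots> = (u * sqnorm n m f + sqnorm n m g / u) / 2" by (simp add: field_simps)
  finally show ?thesis .
qed

lemma ipH_cauchy_schwarz:
  assumes f: "f \<in> Hm n m" and g: "g \<in> Hm n m"
  shows "cmod (ipH n m f g) \<le> sqrt (sqnorm n m f) * sqrt (sqnorm n m g)"
proof (cases "sqnorm n m f = 0 \<or> sqnorm n m g = 0")
  case True
  then show ?thesis using sqnorm_eq_0D[OF f] sqnorm_eq_0D[OF g] by auto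
next
  case False
  define a where "a = sqrt (sqnorm n m f)"
  define b where "b = sqrt (sqnorm n m g)"
  have a: "0 < a" and b: "0 < b" using False sqnorm_nonneg[of n m f] sqnorm_nonneg[of n m g]
    by (auto simp: a_def b_def)
  have fa: "sqnorm n m f = a\<^sup>2" and gb: "sqnorm n m g = b\<^sup>2"
    using sqnorm_nonneg[of n m f] sqnorm_nonneg[of n m g] by (auto simp: a_def b_def)
  have "cmod (ipH n m f g) \<le> ((b/a) * sqnorm n m f + sqnorm n m g / (b/a)) / 2"
    by (rule ipH_le_weighted[OF f g]) (use a b in simp)
  also have "\<dots> = a * b" using a b by (simp add: fa gb field_simps power2_eq_square)
  finally show ?thesis by (simp add: a_def b_def)
qed

lemma adj_eqI:
  assumes B: "\<forall>y\<in>S2. B y \<in> S1" "\<forall>x\<in>S1. \<forall>y\<in>S2. ip2 (A x) y = ip1 x (B y)"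
    and ext: "\<And>u v. u \<in> S1 \<Longrightarrow> v \<in> S1 \<Longrightarrow> (\<And>x. x \<in> S1 \<Longrightarrow> ip1 x u = ip1 x v) \<Longrightarrow> u = v"
    and y: "y \<in> S2"
  shows "adj S1 ip1 S2 ip2 A y = B y"
proof -
  let ?P = "\<lambda>B. (\<forall>y\<in>S2. B y \<in> S1) \<and> (\<forall>x\<in>S1. \<forall>y\<in>S2. ip2 (A x) y = ip1 x (B y))"
  have P: "?P (adj S1 ip1 S2 ip2 A)" unfolding adj_def by (rule someI[of ?P B]) (use B in blast)
  show ?thesis
  proof (rule ext)
    show "adj S1 ip1 S2 ip2 A y \<in> S1" "B y \<in> S1" using P B y by blast+
    show "ip1 x (adj S1 ip1 S2 ip2 A y) = ip1 x (B y)" if "x \<in> S1" for x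
      using P B y that by metis
  qed
qed

lemma Hmn_diff: "F \<in> Hmn n m \<Longrightarrow> G \<in> Hmn n m \<Longrightarrow> (\<lambda>i \<alpha>. F i \<alpha> - G i \<alpha>) \<in> Hmn n m"
  by (auto simp: Hmn_def intro!: Hm_diff)

lemma ipHn_cnj: "ipHn n m G F = cnj (ipHn n m F G)"
  unfolding ipHn_def cnj_sum by (rule sum.cong) (auto intro: ipH_cnj)

lemma ipHn_diff_left:
  assumes "X \<in> Hmn n m" "Y \<in> Hmn n m" "Z \<in> Hmn n m"
  shows "ipHn n m (\<lambda>i \<alpha>. X i \<alpha> - Y i \<alpha>) Z = ipHn n m X Z - ipHn n m Y Z"
  unfolding ipHn_def sum_subtractf[symmetric]
  by (rule sum.cong) (use assms in \<open>auto simp: Hmn_def intro!: ipH_diff_left\<close>)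

lemma ipHn_self_eq_0D:
  assumes D: "D \<in> Hmn n m" and z: "ipHn n m D D = 0"
  shows "D = (\<lambda>i _. 0)"
proof -
  have "complex_of_real (\<Sum>i<n. sqnorm n m (D i)) = 0"
    using z D by (simp add: ipHn_def ipH_self Hmn_def)
  hence "\<forall>i\<in>{..<n}. sqnorm n m (D i) = 0"
    by (subst (asm) of_real_eq_0_iff, subst (asm) sum_nonneg_eq_0_iff) (auto simp: sqnorm_nonneg)
  hence "D i = (\<lambda>_. 0)" for i using D by (cases "i < n") (auto simp: Hmn_def intro!: sqnorm_eq_0D)
  thus ?thesis by (simp add: fun_eq_iff)
qed

lemma Hmn_eqI:
  assumes Y: "Y \<in> Hmn n m" and Z: "Z \<in> Hmn n m"
    and eq: "\<And>X. X \<in> Hmn n m \<Longrightarrow> ipHn n m X Y = ipHn n m X Z"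
  shows "Y = Z"
proof -
  let ?D = "\<lambda>i \<alpha>. Y i \<alpha> - Z i \<alpha>"
  have D: "?D \<in> Hmn n m" by (rule Hmn_diff[OF Y Z])
  have "ipHn n m ?D ?D = ipHn n m Y ?D - ipHn n m Z ?D" by (rule ipHn_diff_left[OF Y Z D])
  also have "\<dots> = cnj (ipHn n m ?D Y) - cnj (ipHn n m ?D Z)"
    by (simp only: ipHn_cnj[of n m Y ?D] ipHn_cnj[of n m Z ?D])
  also have "\<dots> = 0" using eq[OF D] by simp
  finally have "?D = (\<lambda>i _. 0)" by (rule ipHn_self_eq_0D[OF D])
  thus ?thesis by (simp add: fun_eq_iff)
qed

section \<open>The shifts M_{z_i} and their adjoints\<close>

definition inc :: "nat \<Rightarrow> mi \<Rightarrow> mi" where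
  "inc i \<alpha> = \<alpha>(i := Suc (\<alpha> i))"

lemma MI_fun_upd: "i < n \<Longrightarrow> \<alpha>(i := x) \<in> MI n \<longleftrightarrow> \<alpha> \<in> MI n"
  by (auto simp: MI_def)

lemma mlen_fun_upd: "i < n \<Longrightarrow> mlen n (\<alpha>(i := x)) + \<alpha> i = mlen n \<alpha> + x"
  unfolding mlen_def by (subst (1 2) sum.remove[of "{..<n}" i]) auto

lemma prod_fact_fun_upd:
  "i < (n::nat) \<Longrightarrow>
     (\<Prod>j<n. fact ((\<alpha>(i := x)) j) :: real) * fact (\<alpha> i) = (\<Prod>j<n. fact (\<alpha> j)) * fact x"
  by (subst (1 2) prod.remove[of "{..<n}" i]) (auto intro!: prod.cong)

lemma mlen_inc: "i < n \<Longrightarrow> mlen n (inc i \<alpha>) = Suc (mlen n \<alpha>)"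
  using mlen_fun_upd[of i n \<alpha> "Suc (\<alpha> i)"] by (simp add: inc_def)

lemma component_le_mlen: "i < n \<Longrightarrow> \<alpha> i \<le> mlen n \<alpha>"
  unfolding mlen_def by (rule member_le_sum) auto

lemma rho_inc:
  assumes m: "1 \<le> m" and i: "i < n"
  shows "rho n m (inc i \<alpha>) * real (Suc (\<alpha> i)) = rho n m \<alpha> * real (m + mlen n \<alpha>)"
proof -
  define L where "L = mlen n \<alpha>"
  define P where "P = (\<Prod>j<n. fact (\<alpha> j) :: real)"
  have "(\<Prod>j<n. fact (inc i \<alpha> j) :: real) * fact (\<alpha> i) = P * real (Suc (\<alpha> i)) * fact (\<alpha> i)"
    using prod_fact_fun_upd[OF i, of \<alpha> "Suc (\<alpha> i)"] by (simp add: P_def inc_def algebra_simps)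
  hence P': "(\<Prod>j<n. fact (inc i \<alpha> j) :: real) = P * real (Suc (\<alpha> i))" by simp
  have "0 < P" unfolding P_def by (intro prod_pos) auto
  moreover have "fact (m + L) = real (m + L) * fact (m + L - 1)"
    using m by (subst fact_reduce) auto
  ultimately show ?thesis
    unfolding rho_def mlen_inc[OF i] P' L_def[symmetric] P_def[symmetric]
    by (simp add: field_simps del: of_nat_Suc)
qed

lemma rho_le_rho_inc:
  assumes m: "1 \<le> m" and i: "i < n"
  shows "rho n m \<alpha> \<le> rho n m (inc i \<alpha>)"
proof -
  have "rho n m \<alpha> * real (Suc (\<alpha> i)) \<le> rho n m \<alpha> * real (m + mlen n \<alpha>)"
    using m component_le_mlen[OF i, of \<alpha>] rho_pos[of n m \<alpha>] by (intro mult_left_mono) auto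
  also have "\<dots> = rho n m (inc i \<alpha>) * real (Suc (\<alpha> i))" by (rule rho_inc[OF m i, symmetric])
  finally show ?thesis by simp
qed

lemma inj_on_inc: "inj_on (inc i) A"
proof (rule inj_onI)
  fix a b assume h: "inc i a = inc i b"
  show "a = b"
  proof
    fix j from fun_cong[OF h, of j] show "a j = b j" by (auto simp: inc_def split: if_splits)
  qed
qed

lemma inc_image: "i < n \<Longrightarrow> inc i ` MI n = {\<alpha> \<in> MI n. 0 < \<alpha> i}"
proof safe
  fix \<alpha> assume "i < n" "\<alpha> \<in> MI n" "0 < \<alpha> i"
  hence "\<alpha> = inc i (\<alpha>(i := \<alpha> i - 1))" "\<alpha>(i := \<alpha> i - 1) \<in> MI n"
    by (auto simp: inc_def MI_fun_upd)
  thus "\<alpha> \<in> inc i ` MI n" by blast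
qed (auto simp: inc_def MI_fun_upd)

lemma has_sum_inc_iff:
  assumes i: "i < n" and z: "\<And>\<alpha>. \<alpha> \<in> MI n \<Longrightarrow> \<alpha> i = 0 \<Longrightarrow> \<phi> \<alpha> = 0"
  shows "(\<phi> has_sum s) (MI n) \<longleftrightarrow> ((\<lambda>\<beta>. \<phi> (inc i \<beta>)) has_sum s) (MI n)"
proof -
  have "(\<phi> has_sum s) (MI n) \<longleftrightarrow> (\<phi> has_sum s) (inc i ` MI n)"
    by (rule has_sum_cong_neutral) (use z i in \<open>auto simp: inc_image\<close>)
  also have "\<dots> \<longleftrightarrow> ((\<phi> \<circ> inc i) has_sum s) (MI n)" by (rule has_sum_reindex[OF inj_on_inc])
  finally show ?thesis by (simp add: o_def)
qed

lemma summable_on_inc_iff: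
  assumes "i < n" and "\<And>\<alpha>. \<alpha> \<in> MI n \<Longrightarrow> \<alpha> i = 0 \<Longrightarrow> \<phi> \<alpha> = 0"
  shows "\<phi> summable_on (MI n) \<longleftrightarrow> (\<lambda>\<beta>. \<phi> (inc i \<beta>)) summable_on (MI n)"
  unfolding summable_on_def using has_sum_inc_iff[where \<phi> = \<phi>, OF assms] by blast

lemma infsum_inc:
  assumes "i < n" and "\<And>\<alpha>. \<alpha> \<in> MI n \<Longrightarrow> \<alpha> i = 0 \<Longrightarrow> \<phi> \<alpha> = 0"
  shows "infsum \<phi> (MI n) = infsum (\<lambda>\<beta>. \<phi> (inc i \<beta>)) (MI n)"
proof (cases "\<phi> summable_on (MI n)")
  case True
  hence "(\<phi> has_sum infsum \<phi> (MI n)) (MI n)" by (rule has_sum_infsum)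
  hence "((\<lambda>\<beta>. \<phi> (inc i \<beta>)) has_sum infsum \<phi> (MI n)) (MI n)"
    by (subst (asm) has_sum_inc_iff[where \<phi> = \<phi>, OF assms])
  thus ?thesis by (rule infsumI[symmetric])
next
  case False
  hence "\<not> (\<lambda>\<beta>. \<phi> (inc i \<beta>)) summable_on (MI n)" using summable_on_inc_iff[where \<phi> = \<phi>, OF assms] by blast
  thus ?thesis using False by (simp add: infsum_not_exists)
qed

lemma Mzi_inc [simp]: "Mzi i f (inc i \<beta>) = f \<beta>"
  by (simp add: Mzi_def inc_def)

lemma Mzi_eq_0: "\<alpha> i = 0 \<Longrightarrow> Mzi i f \<alpha> = 0"
  by (simp add: Mzi_def)

text \<open>M_{z_i}^* in closed form; the weight comes from rho(\<alpha> + e_i) / rho \<alpha> = (m + |\<alpha>|) / (\<alpha>_i + 1).\<close>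

definition Mzi_star :: "nat \<Rightarrow> nat \<Rightarrow> nat \<Rightarrow> hel \<Rightarrow> hel" where
  "Mzi_star n m i g = (\<lambda>\<alpha>. if \<alpha> \<in> MI n
     then complex_of_real (real (Suc (\<alpha> i)) / real (m + mlen n \<alpha>)) * g (inc i \<alpha>) else 0)"

lemma shift_weight_div_rho:
  assumes m: "1 \<le> m" and i: "i < n"
  shows "real (Suc (\<alpha> i)) / real (m + mlen n \<alpha>) / rho n m \<alpha> = 1 / rho n m (inc i \<alpha>)"
proof -
  have "0 < real (m + mlen n \<alpha>)" using m by simp
  thus ?thesis using rho_inc[OF m i, of \<alpha>] rho_pos[of n m \<alpha>] rho_pos[of n m "inc i \<alpha>"]
    by (simp add: field_simps del: of_nat_Suc of_nat_add)
qed

lemma shift_weight_le_1: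
  "1 \<le> m \<Longrightarrow> i < n \<Longrightarrow> real (Suc (\<alpha> i)) / real (m + mlen n \<alpha>) \<le> 1"
  using component_le_mlen[of i n \<alpha>] by (simp add: divide_le_eq_1 del: of_nat_Suc)

context
  fixes n m :: nat
  assumes m: "1 \<le> m"
begin

lemma Mzi_Hm:
  assumes i: "i < n" and f: "f \<in> Hm n m"
  shows "Mzi i f \<in> Hm n m"
proof -
  have out: "Mzi i f \<alpha> = 0" if "\<alpha> \<notin> MI n" for \<alpha>
    using that Hm_vanishes[OF f, of "\<alpha>(i := \<alpha> i - 1)"] MI_fun_upd[OF i] by (simp add: Mzi_def)
  have "(\<lambda>\<beta>. (cmod (Mzi i f (inc i \<beta>)))\<^sup>2 / rho n m (inc i \<beta>)) summable_on MI n"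
  proof (rule summable_on_comparison_test[OF Hm_summable[OF f]])
    fix \<beta>
    have "(cmod (f \<beta>))\<^sup>2 / rho n m (inc i \<beta>) \<le> (cmod (f \<beta>))\<^sup>2 / rho n m \<beta>"
      by (rule divide_left_mono) (auto intro: rho_le_rho_inc[OF m i] mult_pos_pos rho_pos)
    thus "(cmod (Mzi i f (inc i \<beta>)))\<^sup>2 / rho n m (inc i \<beta>) \<le> (cmod (f \<beta>))\<^sup>2 / rho n m \<beta>"
      by simp
  qed (use rho_pos in \<open>simp add: less_imp_le\<close>)
  hence "(\<lambda>\<alpha>. (cmod (Mzi i f \<alpha>))\<^sup>2 / rho n m \<alpha>) summable_on MI n"
    by (subst summable_on_inc_iff[OF i]) (auto simp: Mzi_eq_0)
  thus ?thesis using out by (simp add: Hm_def)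
qed

lemma Mzi_star_Hm:
  assumes i: "i < n" and g: "g \<in> Hm n m"
  shows "Mzi_star n m i g \<in> Hm n m"
proof -
  let ?\<psi> = "\<lambda>\<alpha>. if \<alpha> i = 0 then 0 else (cmod (g \<alpha>))\<^sup>2 / rho n m \<alpha>"
  have "?\<psi> summable_on MI n"
    by (rule summable_on_comparison_test[OF Hm_summable[OF g]]) (auto intro!: divide_nonneg_pos rho_pos)
  hence s: "(\<lambda>\<beta>. ?\<psi> (inc i \<beta>)) summable_on MI n"
    by (subst summable_on_inc_iff[OF i, symmetric]) auto
  have "(\<lambda>\<alpha>. (cmod (Mzi_star n m i g \<alpha>))\<^sup>2 / rho n m \<alpha>) summable_on MI n"
  proof (rule summable_on_comparison_test[OF s])
    fix \<alpha> assume a: "\<alpha> \<in> MI n"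
    define c where "c = real (Suc (\<alpha> i)) / real (m + mlen n \<alpha>)"
    have c0: "0 \<le> c" and c1: "c \<le> 1" using shift_weight_le_1[OF m i, of \<alpha>] by (auto simp: c_def)
    have "Mzi_star n m i g \<alpha> = complex_of_real c * g (inc i \<alpha>)" using a by (simp add: Mzi_star_def c_def)
    hence "cmod (Mzi_star n m i g \<alpha>) = c * cmod (g (inc i \<alpha>))" using c0 by (simp add: norm_mult)
    hence "(cmod (Mzi_star n m i g \<alpha>))\<^sup>2 / rho n m \<alpha> = c * (c / rho n m \<alpha>) * (cmod (g (inc i \<alpha>)))\<^sup>2"
      by (simp add: power2_eq_square divide_inverse ac_simps)
    also have "\<dots> = c * ((cmod (g (inc i \<alpha>)))\<^sup>2 / rho n m (inc i \<alpha>))"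
      unfolding c_def shift_weight_div_rho[OF m i] by simp
    also have "\<dots> \<le> 1 * ((cmod (g (inc i \<alpha>)))\<^sup>2 / rho n m (inc i \<alpha>))"
      using c1 rho_pos[of n m "inc i \<alpha>"] by (intro mult_right_mono) auto
    finally show "(cmod (Mzi_star n m i g \<alpha>))\<^sup>2 / rho n m \<alpha> \<le> ?\<psi> (inc i \<alpha>)" by (simp add: inc_def)
  qed (use rho_pos in \<open>simp add: less_imp_le\<close>)
  thus ?thesis by (simp add: Hm_def Mzi_star_def)
qed

lemma ipH_Mzi_left:
  assumes i: "i < n"
  shows "ipH n m (Mzi i f) g = ipH n m f (Mzi_star n m i g)"
proof -
  have "ipH n m (Mzi i f) g =
      (\<Sum>\<^sub>\<infinity>\<beta>\<in>MI n. f \<beta> * cnj (g (inc i \<beta>)) / complex_of_real (rho n m (inc i \<beta>)))"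
    unfolding ipH_def by (subst infsum_inc[OF i]) (simp_all add: Mzi_eq_0)
  also have "\<dots> = ipH n m f (Mzi_star n m i g)"
    unfolding ipH_def
  proof (rule infsum_cong)
    fix \<beta> assume "\<beta> \<in> MI n"
    define c where "c = complex_of_real (real (Suc (\<beta> i)) / real (m + mlen n \<beta>))"
    have Mb: "Mzi_star n m i g \<beta> = c * g (inc i \<beta>)" using \<open>\<beta> \<in> MI n\<close> by (simp add: Mzi_star_def c_def)
    have "c / complex_of_real (rho n m \<beta>) = 1 / complex_of_real (rho n m (inc i \<beta>))"
      unfolding c_def by (simp only: of_real_divide[symmetric] shift_weight_div_rho[OF m i]) simp
    moreover have "cnj c = c" by (simp add: c_def)
    ultimately have "f \<beta> * cnj (Mzi_star n m i g \<beta>) / complex_of_real (rho n m \<beta>)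
        = f \<beta> * cnj (g (inc i \<beta>)) * (1 / complex_of_real (rho n m (inc i \<beta>)))"
      unfolding Mb complex_cnj_mult by (metis times_divide_eq_right mult.assoc mult.commute)
    thus "f \<beta> * cnj (g (inc i \<beta>)) / complex_of_real (rho n m (inc i \<beta>)) =
        f \<beta> * cnj (Mzi_star n m i g \<beta>) / complex_of_real (rho n m \<beta>)" by simp
  qed
  finally show ?thesis .
qed

lemma Mzi_adj_eq:
  assumes i: "i < n" and g: "g \<in> Hm n m"
  shows "Mzi_adj n m i g = Mzi_star n m i g"
  unfolding Mzi_adj_def
  by (rule adj_eqI) (use Mzi_star_Hm[OF i] ipH_Mzi_left[OF i] g in \<open>auto intro: Hm_eqI\<close>)

end

section \<open>The operators \<delta>, U(t), M_z and the projection onto Im M_z^*\<close>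

definition delta_weight :: "nat \<Rightarrow> nat \<Rightarrow> mi \<Rightarrow> complex" where
  "delta_weight n m \<alpha> =
     (if mlen n \<alpha> = 0 then 1 else of_nat (m + mlen n \<alpha> - 1) / of_nat (mlen n \<alpha>))"

lemma delta_eq: "delta n m f = (\<lambda>\<alpha>. delta_weight n m \<alpha> * f \<alpha>)"
  by (simp add: delta_def delta_weight_def fun_eq_iff)

lemma cnj_delta_weight [simp]: "cnj (delta_weight n m \<alpha>) = delta_weight n m \<alpha>"
  by (simp add: delta_weight_def)

lemma norm_delta_weight_le: "1 \<le> m \<Longrightarrow> cmod (delta_weight n m \<alpha>) \<le> real m"
proof (cases "mlen n \<alpha> = 0")
  case False
  assume m: "1 \<le> m"
  define L where "L = mlen n \<alpha>"
  have L: "1 \<le> L" using False by (simp add: L_def)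
  obtain a b where "m = Suc a" "L = Suc b" using m L by (cases m; cases L) auto
  hence "m + L - 1 \<le> m * L" by simp
  hence "real (m + L - 1) \<le> real m * real L" by (simp only: of_nat_mult[symmetric] of_nat_le_iff)
  thus ?thesis using L False
    by (simp add: delta_weight_def L_def[symmetric] norm_divide pos_divide_le_eq del: of_nat_diff)
qed (simp add: delta_weight_def)

definition U_factor :: "nat \<Rightarrow> real \<Rightarrow> mi \<Rightarrow> complex" where
  "U_factor n t \<alpha> = exp (\<i> * of_real t * of_nat (mlen n \<alpha>))"

lemma U_eq: "U n t f = (\<lambda>\<alpha>. U_factor n t \<alpha> * f \<alpha>)"
  by (simp add: U_def U_factor_def)

lemma norm_U_factor [simp]: "cmod (U_factor n t \<alpha>) = 1"
proof -
  have "U_factor n t \<alpha> = exp (\<i> * of_real (t * real (mlen n \<alpha>)))" by (simp add: U_factor_def mult.assoc)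
  thus ?thesis by simp
qed

lemma cnj_U_factor: "cnj (U_factor n t \<alpha>) = U_factor n (-t) \<alpha>"
  by (simp add: U_factor_def exp_cnj)

lemma U_Hm: "f \<in> Hm n m \<Longrightarrow> U n t f \<in> Hm n m"
  unfolding U_eq by (rule Hm_mult_bounded[where B=1]) simp_all

lemma ipH_U_left: "ipH n m (U n t f) g = ipH n m f (U n (-t) g)"
  unfolding U_eq ipH_mult_left cnj_U_factor ..

lemma U_adj_eq: "g \<in> Hm n m \<Longrightarrow> U_adj n m t g = U n (-t) g"
  unfolding U_adj_def by (rule adj_eqI) (auto intro: U_Hm ipH_U_left Hm_eqI)

lemma sqnorm_U [simp]: "sqnorm n m (U n t f) = sqnorm n m f"
  by (simp add: sqnorm_def U_eq norm_mult)

definition Mz_star :: "nat \<Rightarrow> nat \<Rightarrow> hel \<Rightarrow> hvec" where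
  "Mz_star n m g = (\<lambda>i. if i < n then Mzi_star n m i g else (\<lambda>_. 0))"

text \<open>M_z M_z^* acts on H_k (k > 0) as multiplication by k / (m + k - 1), which \<delta> inverts;
  hence M_z^* \<delta> M_z is the orthogonal projection onto Im M_z^*.\<close>

definition proj_Im :: "nat \<Rightarrow> nat \<Rightarrow> hvec \<Rightarrow> hvec" where
  "proj_Im n m F = Mz_star n m (delta n m (Mz n F))"

lemma Mzi_star_diff: "Mzi_star n m i (\<lambda>\<alpha>. a \<alpha> - b \<alpha>) = (\<lambda>\<alpha>. Mzi_star n m i a \<alpha> - Mzi_star n m i b \<alpha>)"
  by (auto simp: Mzi_star_def fun_eq_iff right_diff_distrib)

lemma Mzi_star_scale: "Mzi_star n m i (\<lambda>\<alpha>. c * a \<alpha>) = (\<lambda>\<alpha>. c * Mzi_star n m i a \<alpha>)"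
  by (auto simp: Mzi_star_def fun_eq_iff ac_simps)

lemma Mzi_scale: "Mzi i (\<lambda>\<alpha>. c * a \<alpha>) = (\<lambda>\<alpha>. c * Mzi i a \<alpha>)"
  by (auto simp: Mzi_def fun_eq_iff)

lemma Mzi_diff: "Mzi i (\<lambda>\<alpha>. a \<alpha> - b \<alpha>) = (\<lambda>\<alpha>. Mzi i a \<alpha> - Mzi i b \<alpha>)"
  by (auto simp: Mzi_def fun_eq_iff)

lemma Mz_diff: "Mz n (\<lambda>i \<alpha>. X i \<alpha> - Y i \<alpha>) = (\<lambda>\<alpha>. Mz n X \<alpha> - Mz n Y \<alpha>)"
  by (simp add: Mz_def Mzi_diff sum_subtractf)

context
  fixes n m :: nat
  assumes m: "1 \<le> m"
begin

lemma delta_Hm: "f \<in> Hm n m \<Longrightarrow> delta n m f \<in> Hm n m"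
  unfolding delta_eq by (rule Hm_mult_bounded[where B="real m"]) (simp_all add: norm_delta_weight_le[OF m])

lemma ipH_delta_left: "ipH n m (delta n m f) g = ipH n m f (delta n m g)"
  unfolding delta_eq ipH_mult_left by simp

lemma Mz_Hm: "F \<in> Hmn n m \<Longrightarrow> Mz n F \<in> Hm n m"
  unfolding Mz_def by (rule Hm_sum) (auto simp: Hmn_def intro: Mzi_Hm[OF m])

lemma Mz'_Hm: "F \<in> Hmn n m \<Longrightarrow> Mz' n m F \<in> Hm n m"
  unfolding Mz'_def by (intro delta_Hm Mz_Hm)

lemma Mz_star_Hmn: "g \<in> Hm n m \<Longrightarrow> Mz_star n m g \<in> Hmn n m"
  by (auto simp: Hmn_def Mz_star_def intro: Mzi_star_Hm[OF m])

lemma ipHn_Mz_star: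
  assumes X: "X \<in> Hmn n m" and g: "g \<in> Hm n m"
  shows "ipHn n m X (Mz_star n m g) = ipH n m (Mz n X) g"
proof -
  have "ipH n m (Mz n X) g = (\<Sum>i<n. ipH n m (Mzi i (X i)) g)"
    unfolding Mz_def by (rule ipH_sum_left) (use X g in \<open>auto simp: Hmn_def intro: Mzi_Hm[OF m]\<close>)
  also have "\<dots> = ipHn n m X (Mz_star n m g)"
    unfolding ipHn_def Mz_star_def by (rule sum.cong) (auto intro: ipH_Mzi_left[OF m])
  finally show ?thesis by simp
qed

lemma Mz'_adj_eq:
  assumes g: "g \<in> Hm n m"
  shows "Mz'_adj n m g = Mz_star n m (delta n m g)"
  unfolding Mz'_adj_def
proof (rule adj_eqI[where B="\<lambda>g. Mz_star n m (delta n m g)"])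
  show "\<forall>y\<in>Hm n m. Mz_star n m (delta n m y) \<in> Hmn n m" by (auto intro: Mz_star_Hmn delta_Hm)
  show "\<forall>x\<in>Hmn n m. \<forall>y\<in>Hm n m. ipH n m (Mz' n m x) y = ipHn n m x (Mz_star n m (delta n m y))"
    by (auto simp: Mz'_def ipH_delta_left ipHn_Mz_star delta_Hm)
qed (auto intro: Hmn_eqI g)

lemma Mz_adj_eq: "f \<in> Hm n m \<Longrightarrow> Mz_adj n m f = Mz_star n m f"
  by (auto simp: Mz_adj_def Mz_star_def fun_eq_iff Mzi_adj_eq[OF m])

lemma proj_Im_Hmn: "F \<in> Hmn n m \<Longrightarrow> proj_Im n m F \<in> Hmn n m"
  unfolding proj_Im_def by (intro Mz_star_Hmn delta_Hm Mz_Hm)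

lemma Mzi_Mzi_star:
  assumes i: "i < n"
  shows "Mzi i (Mzi_star n m i x) \<alpha> =
    (if \<alpha> \<in> MI n then complex_of_real (real (\<alpha> i) / real (m + mlen n \<alpha> - 1)) * x \<alpha> else 0)"
proof (cases "\<alpha> i = 0")
  case False
  define d where "d = \<alpha>(i := \<alpha> i - 1)"
  have "mlen n d + \<alpha> i = mlen n \<alpha> + (\<alpha> i - 1)" unfolding d_def by (rule mlen_fun_upd[OF i])
  hence md: "m + mlen n d = m + mlen n \<alpha> - 1" using False component_le_mlen[OF i, of \<alpha>] by linarith
  have id: "inc i d = \<alpha>" using False by (simp add: d_def inc_def)
  have dM: "d \<in> MI n \<longleftrightarrow> \<alpha> \<in> MI n" unfolding d_def by (rule MI_fun_upd[OF i])
  have "Mzi i (Mzi_star n m i x) \<alpha> = Mzi_star n m i x d" using False by (simp add: Mzi_def d_def)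
  also have "\<dots> = (if \<alpha> \<in> MI n then complex_of_real (real (\<alpha> i) / real (m + mlen n \<alpha> - 1)) * x \<alpha> else 0)"
    using False unfolding Mzi_star_def dM id md by (simp add: d_def)
  finally show ?thesis .
qed (simp add: Mzi_eq_0)

lemma Mz_Mz_star:
  "Mz n (Mz_star n m h) \<alpha> =
    (if \<alpha> \<in> MI n then complex_of_real (real (mlen n \<alpha>) / real (m + mlen n \<alpha> - 1)) * h \<alpha> else 0)"
proof -
  have "Mz n (Mz_star n m h) \<alpha> = (\<Sum>i<n.
      if \<alpha> \<in> MI n then complex_of_real (real (\<alpha> i) / real (m + mlen n \<alpha> - 1)) * h \<alpha> else 0)"
    unfolding Mz_def Mz_star_def by (rule sum.cong) (auto simp: Mzi_Mzi_star)
  also have "\<dots> = (if \<alpha> \<in> MI n then complex_of_real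
      (\<Sum>i<n. real (\<alpha> i) / real (m + mlen n \<alpha> - 1)) * h \<alpha> else 0)"
    by (cases "\<alpha> \<in> MI n") (simp_all only: sum_distrib_right[symmetric] of_real_sum if_True if_False sum.neutral_const)
  finally show ?thesis by (simp add: mlen_def sum_divide_distrib[symmetric])
qed

lemma Mz_proj_Im:
  assumes F: "F \<in> Hmn n m"
  shows "Mz n (proj_Im n m F) = Mz n F"
proof
  fix \<alpha>
  define h where "h = Mz n F"
  have h: "h \<in> Hm n m" unfolding h_def by (rule Mz_Hm[OF F])
  show "Mz n (proj_Im n m F) \<alpha> = Mz n F \<alpha>"
  proof (cases "\<alpha> \<in> MI n \<and> mlen n \<alpha> \<noteq> 0")
    case True
    define L K where "L = mlen n \<alpha>" and "K = m + mlen n \<alpha> - 1"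
    have "L \<noteq> 0" "K \<noteq> 0" using True m by (auto simp: L_def K_def)
    moreover have "delta n m h \<alpha> = of_nat K / of_nat L * h \<alpha>"
      using True by (simp add: delta_eq delta_weight_def K_def L_def)
    ultimately have "complex_of_real (real L / real K) * delta n m h \<alpha> = h \<alpha>" by simp
    thus ?thesis using True by (simp add: proj_Im_def Mz_Mz_star h_def[symmetric] L_def K_def)
  next
    case False
    moreover have "h \<alpha> = 0" if "mlen n \<alpha> = 0"
    proof -
      have "\<forall>i<n. \<alpha> i = 0" using that component_le_mlen[of _ n \<alpha>] by (metis le_zero_eq)
      thus ?thesis by (simp add: h_def Mz_def Mzi_eq_0)
    qed
    ultimately show ?thesis
      using Hm_vanishes[OF h] by (auto simp: proj_Im_def Mz_Mz_star delta_eq delta_weight_def h_def[symmetric])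
  qed
qed

lemma projIm_eq:
  assumes F: "F \<in> Hmn n m"
  shows "projIm n m F = proj_Im n m F"
proof -
  let ?Q = "\<lambda>G. G \<in> ImMz_adj n m \<and> (\<forall>K\<in>ImMz_adj n m. ipHn n m (\<lambda>i \<alpha>. F i \<alpha> - G i \<alpha>) K = 0)"
  have h: "delta n m (Mz n F) \<in> Hm n m" by (intro delta_Hm Mz_Hm F)
  have PF: "proj_Im n m F \<in> Hmn n m" by (rule proj_Im_Hmn[OF F])
  have orth: "ipHn n m (\<lambda>i \<alpha>. F i \<alpha> - proj_Im n m F i \<alpha>) K = 0" if KI: "K \<in> ImMz_adj n m" for K
  proof -
    obtain g where g: "g \<in> Hm n m" and K: "K = Mz_star n m g"
      using KI by (auto simp: ImMz_adj_def Mz_adj_eq)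
    show ?thesis
      unfolding K ipHn_Mz_star[OF Hmn_diff[OF F PF] g] Mz_diff Mz_proj_Im[OF F] by simp
  qed
  have "proj_Im n m F \<in> ImMz_adj n m"
    unfolding ImMz_adj_def proj_Im_def using h Mz_adj_eq[OF h] by (metis image_eqI)
  hence "?Q (proj_Im n m F)" using orth by blast
  hence Q: "?Q (projIm n m F)" unfolding projIm_def by (rule someI[of ?Q])
  then obtain g1 where g1: "g1 \<in> Hm n m" and G1: "projIm n m F = Mz_star n m g1"
    by (auto simp: ImMz_adj_def Mz_adj_eq)
  define D where "D = (\<lambda>i \<alpha>. projIm n m F i \<alpha> - proj_Im n m F i \<alpha>)"
  have "D = Mz_star n m (\<lambda>\<alpha>. g1 \<alpha> - delta n m (Mz n F) \<alpha>)"
    by (auto simp: D_def G1 proj_Im_def Mz_star_def Mzi_star_diff fun_eq_iff)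
  hence Dim: "D \<in> ImMz_adj n m"
    unfolding ImMz_adj_def using Hm_diff[OF g1 h] Mz_adj_eq[OF Hm_diff[OF g1 h]] by (metis image_eqI)
  have G1H: "projIm n m F \<in> Hmn n m" unfolding G1 by (rule Mz_star_Hmn[OF g1])
  have DH: "D \<in> Hmn n m" unfolding D_def by (rule Hmn_diff[OF G1H PF])
  have "D = (\<lambda>i \<alpha>. (F i \<alpha> - proj_Im n m F i \<alpha>) - (F i \<alpha> - projIm n m F i \<alpha>))"
    unfolding D_def by simp
  hence "ipHn n m D D = ipHn n m (\<lambda>i \<alpha>. F i \<alpha> - proj_Im n m F i \<alpha>) D
      - ipHn n m (\<lambda>i \<alpha>. F i \<alpha> - projIm n m F i \<alpha>) D"
    using ipHn_diff_left[OF Hmn_diff[OF F PF] Hmn_diff[OF F G1H] DH] by simp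
  also have "\<dots> = 0" using orth[OF Dim] Q Dim by simp
  finally have "D = (\<lambda>i _. 0)" by (rule ipHn_self_eq_0D[OF DH])
  thus ?thesis unfolding D_def by (simp add: fun_eq_iff)
qed

lemma ipHn_proj_Im_left:
  assumes H: "H \<in> Hmn n m" and G: "G \<in> Hmn n m"
  shows "ipHn n m (proj_Im n m H) G = ipHn n m H (proj_Im n m G)"
proof -
  have hH: "Mz n H \<in> Hm n m" and hG: "Mz n G \<in> Hm n m" using H G by (auto intro: Mz_Hm)
  have "ipHn n m (proj_Im n m H) G = cnj (ipH n m (Mz n G) (delta n m (Mz n H)))"
    unfolding proj_Im_def ipHn_Mz_star[OF G delta_Hm[OF hH], symmetric] by (rule ipHn_cnj)
  also have "\<dots> = ipH n m (Mz n H) (delta n m (Mz n G))"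
    using ipH_cnj[of n m "delta n m (Mz n H)" "Mz n G"] by (simp add: ipH_delta_left)
  also have "\<dots> = ipHn n m H (proj_Im n m G)"
    unfolding proj_Im_def by (rule ipHn_Mz_star[OF H delta_Hm[OF hG], symmetric])
  finally show ?thesis .
qed

lemma ipHn_Mz'_adj_left:
  assumes y: "y \<in> Hm n m" and G: "G \<in> Hmn n m"
  shows "ipHn n m (Mz'_adj n m y) G = ipH n m y (Mz' n m G)"
proof -
  have "ipHn n m (Mz'_adj n m y) G = cnj (ipH n m (Mz n G) (delta n m y))"
    unfolding Mz'_adj_eq[OF y] ipHn_Mz_star[OF G delta_Hm[OF y], symmetric] by (rule ipHn_cnj)
  also have "\<dots> = ipH n m y (Mz' n m G)"
    by (simp add: Mz'_def ipH_delta_left ipH_cnj[of n m y])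
  finally show ?thesis .
qed

end

section \<open>Covariance of the identity under U(t)\<close>

lemma U_factor_fun_upd_dec:
  assumes i: "i < n" and a: "0 < \<alpha> i"
  shows "U_factor n s (\<alpha>(i := \<alpha> i - 1)) = exp (- (\<i> * of_real s)) * U_factor n s \<alpha>"
proof -
  have "mlen n (\<alpha>(i := \<alpha> i - 1)) + \<alpha> i = mlen n \<alpha> + (\<alpha> i - 1)" by (rule mlen_fun_upd[OF i])
  hence L: "mlen n (\<alpha>(i := \<alpha> i - 1)) + 1 = mlen n \<alpha>" using a component_le_mlen[OF i, of \<alpha>] by linarith
  have "U_factor n s \<alpha> = exp (\<i> * of_real s * of_nat (mlen n (\<alpha>(i := \<alpha> i - 1))) + \<i> * of_real s)"
    unfolding U_factor_def L[symmetric] by (simp add: distrib_left add.commute)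
  thus ?thesis by (simp add: U_factor_def exp_add exp_minus field_simps)
qed

lemma U_factor_inc: "i < n \<Longrightarrow> U_factor n s (inc i \<alpha>) = exp (\<i> * of_real s) * U_factor n s \<alpha>"
  unfolding U_factor_def by (simp add: mlen_inc distrib_left exp_add mult.commute)

lemma Mzi_U: "i < n \<Longrightarrow> Mzi i (U n s f) = (\<lambda>\<alpha>. exp (- (\<i> * of_real s)) * U n s (Mzi i f) \<alpha>)"
  using U_factor_fun_upd_dec[of i n] by (auto simp: Mzi_def U_eq fun_eq_iff)

lemma Mzi_star_U: "i < n \<Longrightarrow> Mzi_star n m i (U n s f) = (\<lambda>\<alpha>. exp (\<i> * of_real s) * U n s (Mzi_star n m i f) \<alpha>)"
  by (auto simp: Mzi_star_def U_eq fun_eq_iff U_factor_inc)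

lemma U_zero [simp]: "U n s (\<lambda>_. 0) = (\<lambda>_. 0)"
  by (simp add: U_eq)

definition Hm_closed :: "nat \<Rightarrow> nat \<Rightarrow> (hel \<Rightarrow> hel) \<Rightarrow> bool" where
  "Hm_closed n m X \<longleftrightarrow> (\<forall>f\<in>Hm n m. X f \<in> Hm n m)"

definition Hm_homogeneous :: "nat \<Rightarrow> nat \<Rightarrow> (hel \<Rightarrow> hel) \<Rightarrow> bool" where
  "Hm_homogeneous n m X \<longleftrightarrow> (\<forall>c. \<forall>f\<in>Hm n m. X (\<lambda>\<alpha>. c * f \<alpha>) = (\<lambda>\<alpha>. c * X f \<alpha>))"

definition Uconj :: "nat \<Rightarrow> nat \<Rightarrow> (hel \<Rightarrow> hel) \<Rightarrow> real \<Rightarrow> hel \<Rightarrow> hel" where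
  "Uconj n m T t = (\<lambda>x. U n t (T (U_adj n m t x)))"

definition combo_coeff :: "nat \<Rightarrow> nat \<Rightarrow> complex" where
  "combo_coeff m j = (-1) ^ j * of_nat (m choose (j + 1))"

definition combo_form :: "nat \<Rightarrow> nat \<Rightarrow> (hel \<Rightarrow> hel) \<Rightarrow> hvec \<Rightarrow> hvec \<Rightarrow> complex" where
  "combo_form n m X F G = (\<Sum>i<n. \<Sum>j<m. combo_coeff m j * ipH n m ((sigma n m ^^ j) X (F i)) (G i))"

text \<open>The identity of the theorem paired with an arbitrary G. Both sides are then scalars
  depending linearly on the operator, so they commute with the integral defining T_k.\<close>

definition weak_identity :: "nat \<Rightarrow> nat \<Rightarrow> (hel \<Rightarrow> hel) \<Rightarrow> bool" where
  "weak_identity n m X \<longleftrightarrow> (\<forall>F\<in>Hmn n m. \<forall>G\<in>Hmn n m.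
     ipH n m (X (Mz' n m F)) (Mz' n m G) = combo_form n m X (proj_Im n m F) (proj_Im n m G))"

definition U_vec :: "nat \<Rightarrow> real \<Rightarrow> hvec \<Rightarrow> hvec" where
  "U_vec n s F = (\<lambda>i. U n s (F i))"

lemma U_vec_Hmn: "F \<in> Hmn n m \<Longrightarrow> U_vec n s F \<in> Hmn n m"
  by (auto simp: U_vec_def Hmn_def U_Hm)

lemma Mz_U_vec: "Mz n (U_vec n s F) = (\<lambda>\<alpha>. exp (- (\<i> * of_real s)) * U n s (Mz n F) \<alpha>)"
proof -
  have "Mz n (U_vec n s F) = (\<lambda>\<alpha>. \<Sum>i<n. exp (- (\<i> * of_real s)) * U n s (Mzi i (F i)) \<alpha>)"
    unfolding Mz_def U_vec_def by (rule ext, rule sum.cong) (auto simp: Mzi_U)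
  thus ?thesis by (simp add: Mz_def U_eq sum_distrib_left ac_simps)
qed

lemma delta_scale_U: "delta n m (\<lambda>\<alpha>. c * U n s x \<alpha>) = (\<lambda>\<alpha>. c * U n s (delta n m x) \<alpha>)"
  by (simp add: delta_eq U_eq ac_simps)

lemma Mz'_U_vec: "Mz' n m (U_vec n s F) = (\<lambda>\<alpha>. exp (- (\<i> * of_real s)) * U n s (Mz' n m F) \<alpha>)"
  unfolding Mz'_def Mz_U_vec delta_scale_U ..

lemma proj_Im_U_vec: "proj_Im n m (U_vec n s F) = U_vec n s (proj_Im n m F)"
proof -
  have "proj_Im n m (U_vec n s F) =
      Mz_star n m (\<lambda>\<alpha>. exp (- (\<i> * of_real s)) * U n s (delta n m (Mz n F)) \<alpha>)"
    unfolding proj_Im_def Mz_U_vec delta_scale_U ..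
  also have "\<dots> = U_vec n s (proj_Im n m F)"
    unfolding proj_Im_def U_vec_def Mz_star_def
    by (rule ext) (auto simp: Mzi_star_scale Mzi_star_U exp_minus mult.assoc[symmetric])
  finally show ?thesis .
qed

context
  fixes n m :: nat
  assumes m: "1 \<le> m"
begin

lemma sigma_Hm_closed: "Hm_closed n m X \<Longrightarrow> Hm_closed n m (sigma n m X)"
  unfolding Hm_closed_def sigma_def
  by (auto intro!: Hm_sum Mzi_Hm[OF m] simp: Mzi_adj_eq[OF m] Mzi_star_Hm[OF m])

lemma ipH_sigma:
  assumes X: "Hm_closed n m X" and a: "a \<in> Hm n m" and b: "b \<in> Hm n m"
  shows "ipH n m (sigma n m X a) b = (\<Sum>i<n. ipH n m (X (Mzi_star n m i a)) (Mzi_star n m i b))"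
proof -
  have "ipH n m (sigma n m X a) b = (\<Sum>i<n. ipH n m (Mzi i (X (Mzi_adj n m i a))) b)"
    unfolding sigma_def
    by (rule ipH_sum_left)
      (use X a b in \<open>auto intro!: Mzi_Hm[OF m] simp: Hm_closed_def Mzi_adj_eq[OF m] Mzi_star_Hm[OF m]\<close>)
  also have "\<dots> = (\<Sum>i<n. ipH n m (X (Mzi_star n m i a)) (Mzi_star n m i b))"
    by (rule sum.cong) (auto simp: ipH_Mzi_left[OF m] Mzi_adj_eq[OF m] a)
  finally show ?thesis .
qed

lemma sigma_Hm_homogeneous:
  assumes X: "Hm_closed n m X" and H: "Hm_homogeneous n m X"
  shows "Hm_homogeneous n m (sigma n m X)"
  unfolding Hm_homogeneous_def
proof (intro allI ballI)
  fix c f assume f: "f \<in> Hm n m"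
  have "sigma n m X (\<lambda>\<alpha>. c * f \<alpha>) = (\<lambda>\<alpha>. \<Sum>i<n. Mzi i (X (\<lambda>\<alpha>. c * Mzi_star n m i f \<alpha>)) \<alpha>)"
    unfolding sigma_def using Hm_scale[OF f] by (simp add: Mzi_adj_eq[OF m] Mzi_star_scale)
  also have "\<dots> = (\<lambda>\<alpha>. \<Sum>i<n. c * Mzi i (X (Mzi_star n m i f)) \<alpha>)"
    using H f by (auto simp: Hm_homogeneous_def Mzi_star_Hm[OF m] Mzi_scale intro!: sum.cong)
  also have "\<dots> = (\<lambda>\<alpha>. c * sigma n m X f \<alpha>)"
    unfolding sigma_def using f by (simp add: Mzi_adj_eq[OF m] sum_distrib_left)
  finally show "sigma n m X (\<lambda>\<alpha>. c * f \<alpha>) = (\<lambda>\<alpha>. c * sigma n m X f \<alpha>)" .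
qed

lemma sigma_pow_Hm_closed: "Hm_closed n m X \<Longrightarrow> Hm_closed n m ((sigma n m ^^ j) X)"
  by (induction j) (auto intro: sigma_Hm_closed)

lemma sigma_pow_Hm_homogeneous:
  "Hm_closed n m X \<Longrightarrow> Hm_homogeneous n m X \<Longrightarrow> Hm_homogeneous n m ((sigma n m ^^ j) X)"
  by (induction j) (auto intro: sigma_Hm_homogeneous sigma_pow_Hm_closed)

lemma Uconj_Hm_closed: "Hm_closed n m T \<Longrightarrow> Hm_closed n m (Uconj n m T t)"
  by (auto simp: Hm_closed_def Uconj_def U_adj_eq U_Hm)

lemma ipH_sigma_pow_Uconj:
  assumes T: "Hm_closed n m T" and H: "Hm_homogeneous n m T" and a: "a \<in> Hm n m" and b: "b \<in> Hm n m"
  shows "ipH n m ((sigma n m ^^ j) T (U n (-t) a)) (U n (-t) b) =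
    ipH n m ((sigma n m ^^ j) (Uconj n m T t) a) b"
  using a b
proof (induction j arbitrary: a b)
  case 0
  then show ?case by (simp add: Uconj_def U_adj_eq ipH_U_left)
next
  case (Suc j)
  let ?e = "exp (- (\<i> * complex_of_real t))"
  have e: "cmod ?e = 1"
    by (metis minus_mult_right norm_exp_i_times of_real_minus)
  have Sj: "Hm_closed n m ((sigma n m ^^ j) T)" by (rule sigma_pow_Hm_closed[OF T])
  have Hj: "Hm_homogeneous n m ((sigma n m ^^ j) T)" by (rule sigma_pow_Hm_homogeneous[OF T H])
  have "ipH n m ((sigma n m ^^ j) T (Mzi_star n m i (U n (-t) a))) (Mzi_star n m i (U n (-t) b))
      = ipH n m ((sigma n m ^^ j) (Uconj n m T t) (Mzi_star n m i a)) (Mzi_star n m i b)" if i: "i < n" for i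
  proof -
    have ma: "U n (-t) (Mzi_star n m i a) \<in> Hm n m" by (intro U_Hm Mzi_star_Hm[OF m i] Suc.prems)
    have "ipH n m ((sigma n m ^^ j) T (Mzi_star n m i (U n (-t) a))) (Mzi_star n m i (U n (-t) b))
        = ipH n m (\<lambda>\<alpha>. ?e * (sigma n m ^^ j) T (U n (-t) (Mzi_star n m i a)) \<alpha>)
            (\<lambda>\<alpha>. ?e * U n (-t) (Mzi_star n m i b) \<alpha>)"
      using Hj ma by (simp add: Mzi_star_U[OF i] Hm_homogeneous_def)
    also have "\<dots> = ipH n m ((sigma n m ^^ j) T (U n (-t) (Mzi_star n m i a))) (U n (-t) (Mzi_star n m i b))"
      by (rule ipH_unimodular[OF e])
    also have "\<dots> = ipH n m ((sigma n m ^^ j) (Uconj n m T t) (Mzi_star n m i a)) (Mzi_star n m i b)"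
      by (intro Suc.IH Mzi_star_Hm[OF m i] Suc.prems)
    finally show ?thesis .
  qed
  thus ?case
    using ipH_sigma[OF Sj U_Hm[OF Suc.prems(1)] U_Hm[OF Suc.prems(2)]]
      ipH_sigma[OF sigma_pow_Hm_closed[OF Uconj_Hm_closed[OF T]] Suc.prems] by simp
qed

lemma combo_Hm_closed: "Hm_closed n m X \<Longrightarrow> Hm_closed n m (combo n m X)"
  unfolding Hm_closed_def combo_def
  by (auto intro!: Hm_sum Hm_scale sigma_pow_Hm_closed[unfolded Hm_closed_def, rule_format])

lemma ipH_combo:
  assumes X: "Hm_closed n m X" and a: "a \<in> Hm n m" and b: "b \<in> Hm n m"
  shows "ipH n m (combo n m X a) b = (\<Sum>j<m. combo_coeff m j * ipH n m ((sigma n m ^^ j) X a) b)"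
proof -
  have "\<And>j. (sigma n m ^^ j) X a \<in> Hm n m" using sigma_pow_Hm_closed[OF X] a by (auto simp: Hm_closed_def)
  hence "ipH n m (combo n m X a) b = (\<Sum>j<m. ipH n m (\<lambda>\<alpha>. combo_coeff m j * (sigma n m ^^ j) X a \<alpha>) b)"
    unfolding combo_def combo_coeff_def by (intro ipH_sum_left) (auto intro!: Hm_scale b)
  thus ?thesis by (simp add: ipH_scale_left)
qed

lemma oplus_Hmn: "Hm_closed n m X \<Longrightarrow> F \<in> Hmn n m \<Longrightarrow> oplus n X F \<in> Hmn n m"
  by (auto simp: oplus_def Hmn_def Hm_closed_def)

lemma ipHn_oplus_combo:
  assumes X: "Hm_closed n m X" and F: "F \<in> Hmn n m" and G: "G \<in> Hmn n m"
  shows "ipHn n m (oplus n (combo n m X) F) G = combo_form n m X F G"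
  unfolding ipHn_def combo_form_def oplus_def
  by (rule sum.cong) (use F G in \<open>auto simp: Hmn_def ipH_combo[OF X]\<close>)

lemma ipHn_identity_rhs:
  assumes X: "Hm_closed n m X" and F: "F \<in> Hmn n m" and G: "G \<in> Hmn n m"
  shows "ipHn n m (projIm n m (oplus n (combo n m X) (projIm n m F))) G =
    combo_form n m X (proj_Im n m F) (proj_Im n m G)"
proof -
  have PF: "proj_Im n m F \<in> Hmn n m" by (rule proj_Im_Hmn[OF m F])
  have O: "oplus n (combo n m X) (proj_Im n m F) \<in> Hmn n m" by (rule oplus_Hmn[OF combo_Hm_closed[OF X] PF])
  show ?thesis
    unfolding projIm_eq[OF m F] projIm_eq[OF m O] ipHn_proj_Im_left[OF m O G]
    by (rule ipHn_oplus_combo[OF X PF proj_Im_Hmn[OF m G]])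
qed

lemma identity_iff_weak_identity:
  assumes X: "Hm_closed n m X"
  shows "(\<forall>F\<in>Hmn n m. Mz'_adj n m (X (Mz' n m F)) = projIm n m (oplus n (combo n m X) (projIm n m F)))
    \<longleftrightarrow> weak_identity n m X"
proof -
  have XF: "X (Mz' n m F) \<in> Hm n m" if "F \<in> Hmn n m" for F
    using X Mz'_Hm[OF m that] by (simp add: Hm_closed_def)
  have eq: "ipHn n m (Mz'_adj n m (X (Mz' n m F))) G = ipH n m (X (Mz' n m F)) (Mz' n m G)"
    if "F \<in> Hmn n m" "G \<in> Hmn n m" for F G
    by (rule ipHn_Mz'_adj_left[OF m XF[OF that(1)] that(2)])
  have "Mz'_adj n m (X (Mz' n m F)) = projIm n m (oplus n (combo n m X) (projIm n m F))"
    if F: "F \<in> Hmn n m" and W: "weak_identity n m X" for F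
  proof (rule Hmn_eqI)
    have O: "oplus n (combo n m X) (projIm n m F) \<in> Hmn n m"
      unfolding projIm_eq[OF m F] by (rule oplus_Hmn[OF combo_Hm_closed[OF X] proj_Im_Hmn[OF m F]])
    show "Mz'_adj n m (X (Mz' n m F)) \<in> Hmn n m"
      unfolding Mz'_adj_eq[OF m XF[OF F]] by (intro Mz_star_Hmn[OF m] delta_Hm[OF m] XF[OF F])
    show "projIm n m (oplus n (combo n m X) (projIm n m F)) \<in> Hmn n m"
      unfolding projIm_eq[OF m O] by (rule proj_Im_Hmn[OF m O])
    fix G assume G: "G \<in> Hmn n m"
    show "ipHn n m G (Mz'_adj n m (X (Mz' n m F))) = ipHn n m G (projIm n m (oplus n (combo n m X) (projIm n m F)))"
      using W F G eq[OF F G] ipHn_identity_rhs[OF X F G] ipHn_cnj[of n m G]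
      by (simp add: weak_identity_def)
  qed
  thus ?thesis using eq ipHn_identity_rhs[OF X] by (auto simp: weak_identity_def)
qed

lemma weak_identity_Uconj:
  assumes T: "Hm_closed n m T" and H: "Hm_homogeneous n m T" and W: "weak_identity n m T"
  shows "weak_identity n m (Uconj n m T t)"
  unfolding weak_identity_def
proof (intro ballI)
  fix F G assume F: "F \<in> Hmn n m" and G: "G \<in> Hmn n m"
  let ?e = "exp (\<i> * complex_of_real t)"
  have e: "cmod ?e = 1" by simp
  have x: "Mz' n m F \<in> Hm n m" by (rule Mz'_Hm[OF m F])
  have "ipH n m (Uconj n m T t (Mz' n m F)) (Mz' n m G) = ipH n m (T (U n (-t) (Mz' n m F))) (U n (-t) (Mz' n m G))"
    by (simp add: Uconj_def U_adj_eq[OF x] ipH_U_left)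
  also have "\<dots> = ipH n m (\<lambda>\<alpha>. ?e * T (U n (-t) (Mz' n m F)) \<alpha>) (\<lambda>\<alpha>. ?e * U n (-t) (Mz' n m G) \<alpha>)"
    by (rule ipH_unimodular[OF e, symmetric])
  also have "\<dots> = ipH n m (T (Mz' n m (U_vec n (-t) F))) (Mz' n m (U_vec n (-t) G))"
    using H U_Hm[OF x] by (simp add: Mz'_U_vec Hm_homogeneous_def)
  also have "\<dots> = combo_form n m T (U_vec n (-t) (proj_Im n m F)) (U_vec n (-t) (proj_Im n m G))"
    using W U_vec_Hmn[OF F] U_vec_Hmn[OF G] by (simp add: weak_identity_def proj_Im_U_vec)
  also have "\<dots> = combo_form n m (Uconj n m T t) (proj_Im n m F) (proj_Im n m G)"
    using proj_Im_Hmn[OF m F] proj_Im_Hmn[OF m G]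
    by (auto simp: combo_form_def U_vec_def Hmn_def ipH_sigma_pow_Uconj[OF T H] intro!: sum.cong)
  finally show "ipH n m (Uconj n m T t (Mz' n m F)) (Mz' n m G) =
      combo_form n m (Uconj n m T t) (proj_Im n m F) (proj_Im n m G)" .
qed

end

section \<open>Weak continuity of t \<mapsto> U(t) T U(t)^*\<close>

lemma infsum_split_finite:
  fixes w :: "'a \<Rightarrow> real"
  assumes s: "w summable_on A" and F: "finite F" "F \<subseteq> A"
  shows "infsum w A = sum w F + infsum w (A - F)"
proof -
  have "infsum w (F \<union> (A - F)) = infsum w F + infsum w (A - F)"
    by (rule infsum_Un_disjoint) (use s F in \<open>auto intro: summable_on_subset\<close>)
  moreover have "F \<union> (A - F) = A" using F by blast
  ultimately show ?thesis using F by simp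
qed

lemma sqnorm_U_diff:
  "sqnorm n m (\<lambda>\<alpha>. U n s x \<alpha> - U n s' x \<alpha>) =
     (\<Sum>\<^sub>\<infinity>\<alpha>\<in>MI n. (cmod (U_factor n s \<alpha> - U_factor n s' \<alpha>))\<^sup>2 * ((cmod (x \<alpha>))\<^sup>2 / rho n m \<alpha>))"
  unfolding sqnorm_def U_eq
  by (rule infsum_cong) (simp add: left_diff_distrib[symmetric] norm_mult power_mult_distrib)

lemma norm_U_factor_diff_sq_le: "(cmod (U_factor n s \<alpha> - U_factor n s' \<alpha>))\<^sup>2 \<le> 4"
proof -
  have "cmod (U_factor n s \<alpha> - U_factor n s' \<alpha>) \<le> 2"
    using norm_triangle_ineq4[of "U_factor n s \<alpha>" "U_factor n s' \<alpha>"] by simp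
  hence "(cmod (U_factor n s \<alpha> - U_factor n s' \<alpha>))\<^sup>2 \<le> 2\<^sup>2" by (intro power_mono) auto
  thus ?thesis by simp
qed

lemma sqnorm_U_diff_le:
  assumes x: "x \<in> Hm n m" and F: "finite F" "F \<subseteq> MI n"
  shows "sqnorm n m (\<lambda>\<alpha>. U n s x \<alpha> - U n s' x \<alpha>) \<le>
    (\<Sum>\<alpha>\<in>F. (cmod (U_factor n s \<alpha> - U_factor n s' \<alpha>))\<^sup>2 * ((cmod (x \<alpha>))\<^sup>2 / rho n m \<alpha>))
    + 4 * infsum (\<lambda>\<alpha>. (cmod (x \<alpha>))\<^sup>2 / rho n m \<alpha>) (MI n - F)"
proof -
  let ?w = "\<lambda>\<alpha>. (cmod (x \<alpha>))\<^sup>2 / rho n m \<alpha>"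
  let ?q = "\<lambda>\<alpha>. (cmod (U_factor n s \<alpha> - U_factor n s' \<alpha>))\<^sup>2 * ?w \<alpha>"
  have w: "?w summable_on MI n" by (rule Hm_summable[OF x])
  have w0: "0 \<le> ?w \<alpha>" for \<alpha> using rho_pos[of n m \<alpha>] by simp
  have q4: "?q \<alpha> \<le> 4 * ?w \<alpha>" for \<alpha>
    using norm_U_factor_diff_sq_le w0[of \<alpha>] by (intro mult_right_mono) auto
  have qs: "?q summable_on MI n"
  proof (rule summable_on_comparison_test[of "\<lambda>\<alpha>. 4 * ?w \<alpha>"])
    show "(\<lambda>\<alpha>. 4 * ?w \<alpha>) summable_on MI n" using w by (rule summable_on_cmult_right)
    show "0 \<le> ?q \<alpha>" for \<alpha> by (rule mult_nonneg_nonneg[OF zero_le_power2 w0])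
  qed (rule q4)
  have "sqnorm n m (\<lambda>\<alpha>. U n s x \<alpha> - U n s' x \<alpha>) = sum ?q F + infsum ?q (MI n - F)"
    unfolding sqnorm_U_diff by (rule infsum_split_finite[OF qs F])
  also have "infsum ?q (MI n - F) \<le> infsum (\<lambda>\<alpha>. 4 * ?w \<alpha>) (MI n - F)"
    by (rule infsum_mono[OF summable_on_subset[OF qs] summable_on_subset[OF summable_on_cmult_right[OF w]] q4])
      auto
  also have "\<dots> = 4 * infsum ?w (MI n - F)" by (rule infsum_cmult_right')
  finally show ?thesis by simp
qed

text \<open>Strong continuity of U: choose a finite set of multi-indices carrying all but
  \<epsilon>/8 of the norm of x; on it the factors converge, and the rest contributes at most 4 \<epsilon>/8.\<close>

lemma tendsto_sqnorm_U_diff: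
  assumes x: "x \<in> Hm n m"
  shows "((\<lambda>t. sqnorm n m (\<lambda>\<alpha>. U n (-t) x \<alpha> - U n (-t0) x \<alpha>)) \<longlongrightarrow> 0) (at t0)"
proof (rule order_tendstoI)
  fix a :: real assume "a < 0"
  thus "\<forall>\<^sub>F t in at t0. a < sqnorm n m (\<lambda>\<alpha>. U n (-t) x \<alpha> - U n (-t0) x \<alpha>)"
    using sqnorm_nonneg by (auto intro!: always_eventually) (metis less_le_trans)
next
  fix \<epsilon> :: real assume e: "0 < \<epsilon>"
  let ?w = "\<lambda>\<alpha>. (cmod (x \<alpha>))\<^sup>2 / rho n m \<alpha>"
  let ?q = "\<lambda>t \<alpha>. (cmod (U_factor n (-t) \<alpha> - U_factor n (-t0) \<alpha>))\<^sup>2 * ?w \<alpha>"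
  have w: "?w summable_on MI n" by (rule Hm_summable[OF x])
  hence hs: "(?w has_sum sqnorm n m x) (MI n)" unfolding sqnorm_def by (rule has_sum_infsum)
  obtain F where F: "finite F" "F \<subseteq> MI n" and d: "dist (sum ?w F) (sqnorm n m x) \<le> \<epsilon> / 8"
    using has_sum_finite_approximation[OF hs, of "\<epsilon>/8"] e by auto
  have "infsum ?w (MI n - F) \<le> \<epsilon> / 8"
    using infsum_split_finite[OF w F] d by (simp add: sqnorm_def dist_real_def)
  hence bnd: "sqnorm n m (\<lambda>\<alpha>. U n (-t) x \<alpha> - U n (-t0) x \<alpha>) \<le> sum (?q t) F + \<epsilon> / 2" for t
    using sqnorm_U_diff_le[OF x F, of "-t" "-t0"] by linarith
  have "((\<lambda>t. sum (?q t) F) \<longlongrightarrow> sum (?q t0) F) (at t0)"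
    unfolding U_factor_def by (intro tendsto_intros)
  hence "\<forall>\<^sub>F t in at t0. sum (?q t) F < \<epsilon> / 2" by (rule order_tendstoD(2)) (use e in simp)
  thus "\<forall>\<^sub>F t in at t0. sqnorm n m (\<lambda>\<alpha>. U n (-t) x \<alpha> - U n (-t0) x \<alpha>) < \<epsilon>"
  proof eventually_elim
    case (elim t) show ?case using bnd[of t] elim by linarith
  qed
qed

lemma bounded_op_Hm_closed: "bounded_op n m T \<Longrightarrow> Hm_closed n m T"
  by (simp add: bounded_op_def Hm_closed_def)

lemma bounded_op_Hm_homogeneous: "bounded_op n m T \<Longrightarrow> Hm_homogeneous n m T"
  by (simp add: bounded_op_def Hm_homogeneous_def)

lemma bounded_op_diff:
  assumes T: "bounded_op n m T" and f: "f \<in> Hm n m" and g: "g \<in> Hm n m"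
  shows "T (\<lambda>\<alpha>. f \<alpha> - g \<alpha>) = (\<lambda>\<alpha>. T f \<alpha> - T g \<alpha>)"
proof -
  have add: "\<forall>f\<in>Hm n m. \<forall>g\<in>Hm n m. T (\<lambda>\<alpha>. f \<alpha> + g \<alpha>) = (\<lambda>\<alpha>. T f \<alpha> + T g \<alpha>)"
    using T unfolding bounded_op_def by blast
  have "T (\<lambda>\<alpha>. f \<alpha> + (-1) * g \<alpha>) = (\<lambda>\<alpha>. T f \<alpha> + T (\<lambda>\<alpha>. (-1) * g \<alpha>) \<alpha>)"
    by (rule add[rule_format, OF f Hm_scale[OF g]])
  also have "T (\<lambda>\<alpha>. (-1) * g \<alpha>) = (\<lambda>\<alpha>. (-1) * T g \<alpha>)"
    using T g unfolding bounded_op_def by blast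
  finally show ?thesis by simp
qed

lemma bounded_op_sqnorm_le:
  assumes T: "bounded_op n m T"
  obtains C where "\<And>f. f \<in> Hm n m \<Longrightarrow> sqnorm n m (T f) \<le> C * sqnorm n m f"
proof -
  obtain C where C: "\<forall>f\<in>Hm n m. Re (ipH n m (T f) (T f)) \<le> C * Re (ipH n m f f)"
    using T unfolding bounded_op_def by blast
  show ?thesis
  proof (rule that)
    fix f assume f: "f \<in> Hm n m"
    have "T f \<in> Hm n m" using T f by (simp add: bounded_op_def)
    moreover have "Re (ipH n m (T f) (T f)) \<le> C * Re (ipH n m f f)" using C f by blast
    ultimately show "sqnorm n m (T f) \<le> C * sqnorm n m f" by (simp add: ipH_self f)
  qed
qed

context
  fixes n m :: nat and T :: "hel \<Rightarrow> hel" and C :: real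
  assumes T: "bounded_op n m T"
    and C: "\<And>f. f \<in> Hm n m \<Longrightarrow> sqnorm n m (T f) \<le> C * sqnorm n m f"
begin

lemma T_Hm: "f \<in> Hm n m \<Longrightarrow> T f \<in> Hm n m"
  using T by (simp add: bounded_op_def)

lemma ipH_Uconj:
  "f \<in> Hm n m \<Longrightarrow> ipH n m (Uconj n m T t f) g = ipH n m (T (U n (-t) f)) (U n (-t) g)"
  by (simp add: Uconj_def U_adj_eq ipH_U_left)

lemma norm_ipH_T_le:
  assumes f: "f \<in> Hm n m" and g: "g \<in> Hm n m"
  shows "cmod (ipH n m (T f) g) \<le> sqrt (C * sqnorm n m f) * sqrt (sqnorm n m g)"
proof -
  have "cmod (ipH n m (T f) g) \<le> sqrt (sqnorm n m (T f)) * sqrt (sqnorm n m g)"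
    by (rule ipH_cauchy_schwarz[OF T_Hm[OF f] g])
  also have "\<dots> \<le> sqrt (C * sqnorm n m f) * sqrt (sqnorm n m g)"
    using C[OF f] by (intro mult_right_mono real_sqrt_le_mono) (auto simp: sqnorm_nonneg)
  finally show ?thesis .
qed

lemma norm_ipH_Uconj_le:
  assumes f: "f \<in> Hm n m" and g: "g \<in> Hm n m"
  shows "cmod (ipH n m (Uconj n m T t f) g) \<le> sqrt (C * sqnorm n m f) * sqrt (sqnorm n m g)"
  using norm_ipH_T_le[OF U_Hm[OF f] U_Hm[OF g], of "-t" "-t"] by (simp add: ipH_Uconj[OF f])

lemma isCont_ipH_Uconj:
  assumes f: "f \<in> Hm n m" and g: "g \<in> Hm n m"
  shows "isCont (\<lambda>t. ipH n m (Uconj n m T t f) g) t0"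
proof -
  let ?a = "\<lambda>t. U n (-t) f" and ?b = "\<lambda>t. U n (-t) g"
  let ?da = "\<lambda>t \<alpha>. ?a t \<alpha> - ?a t0 \<alpha>" and ?db = "\<lambda>t \<alpha>. ?b t \<alpha> - ?b t0 \<alpha>"
  have a: "?a t \<in> Hm n m" and b: "?b t \<in> Hm n m" for t using f g by (auto intro: U_Hm)
  have da: "?da t \<in> Hm n m" and db: "?db t \<in> Hm n m" for t using a b by (auto intro: Hm_diff)
  define B where "B t = sqrt (C * sqnorm n m (?da t)) * sqrt (sqnorm n m g)
     + sqrt (sqnorm n m (T (?a t0))) * sqrt (sqnorm n m (?db t))" for t
  have est: "cmod (ipH n m (Uconj n m T t f) g - ipH n m (Uconj n m T t0 f) g) \<le> B t" for t
  proof -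
    have "ipH n m (Uconj n m T t f) g - ipH n m (Uconj n m T t0 f) g
        = ipH n m (T (?da t)) (?b t) + ipH n m (T (?a t0)) (?db t)"
      by (simp add: ipH_Uconj[OF f] ipH_diff_left ipH_diff_right T_Hm a b bounded_op_diff[OF T a a])
    moreover have "cmod (ipH n m (T (?da t)) (?b t)) \<le> sqrt (C * sqnorm n m (?da t)) * sqrt (sqnorm n m g)"
      using norm_ipH_T_le[OF da b] by simp
    moreover have "cmod (ipH n m (T (?a t0)) (?db t)) \<le> sqrt (sqnorm n m (T (?a t0))) * sqrt (sqnorm n m (?db t))"
      by (rule ipH_cauchy_schwarz[OF T_Hm[OF a] db])
    ultimately show ?thesis unfolding B_def by (smt (verit) norm_triangle_ineq)
  qed
  have "(B \<longlongrightarrow> sqrt (C * 0) * sqrt (sqnorm n m g) + sqrt (sqnorm n m (T (?a t0))) * sqrt 0) (at t0)"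
    unfolding B_def by (intro tendsto_intros tendsto_sqnorm_U_diff f g)
  hence "(B \<longlongrightarrow> 0) (at t0)" by simp
  hence "((\<lambda>t. ipH n m (Uconj n m T t f) g - ipH n m (Uconj n m T t0 f) g) \<longlongrightarrow> 0) (at t0)"
    by (rule Lim_null_comparison[OF always_eventually, rotated]) (use est in blast)
  thus ?thesis unfolding isCont_def by (rule LIM_zero_cancel)
qed

lemma integrable_ipH_Uconj:
  assumes f: "f \<in> Hm n m" and g: "g \<in> Hm n m"
  shows "(\<lambda>t. exp (- (\<i> * of_int k * of_real t)) * ipH n m (Uconj n m T t f) g) integrable_on {0..2*pi}"
  by (rule integrable_continuous_interval, intro continuous_intros continuous_at_imp_continuous_on)
    (use isCont_ipH_Uconj[OF f g] in blast)

end

section \<open>Riesz representation of bounded antilinear functionals on H_m(B)\<close>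

definition truncate :: "mi set \<Rightarrow> hel \<Rightarrow> hel" where
  "truncate F g = (\<lambda>\<beta>. if \<beta> \<in> F then g \<beta> else 0)"

definition unit_vec :: "mi \<Rightarrow> hel" where
  "unit_vec \<alpha> = (\<lambda>\<beta>. if \<beta> = \<alpha> then 1 else 0)"

lemma truncate_Hm:
  assumes "finite F" "F \<subseteq> MI n"
  shows "truncate F g \<in> Hm n m"
proof -
  have "(\<lambda>\<alpha>. (cmod (truncate F g \<alpha>))\<^sup>2 / rho n m \<alpha>) summable_on MI n"
    by (rule summable_on_cong_neutral[THEN iffD1, of _ F]) (use assms in \<open>auto simp: truncate_def\<close>)
  thus ?thesis using assms by (auto simp: Hm_def truncate_def)
qed

lemma truncate_eq_sum: "finite F \<Longrightarrow> truncate F g = (\<lambda>\<beta>. \<Sum>\<alpha>\<in>F. g \<alpha> * unit_vec \<alpha> \<beta>)"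
proof (rule ext)
  fix \<beta> assume "finite F"
  have "(\<Sum>\<alpha>\<in>F. g \<alpha> * unit_vec \<alpha> \<beta>) = (\<Sum>\<alpha>\<in>F. if \<beta> = \<alpha> then g \<alpha> else 0)"
    by (rule sum.cong) (auto simp: unit_vec_def)
  thus "truncate F g \<beta> = (\<Sum>\<alpha>\<in>F. g \<alpha> * unit_vec \<alpha> \<beta>)"
    using \<open>finite F\<close> by (simp add: truncate_def sum.delta')
qed

lemma unit_vec_Hm: "\<alpha> \<in> MI n \<Longrightarrow> unit_vec \<alpha> \<in> Hm n m"
  using truncate_Hm[of "{\<alpha>}" n "\<lambda>_. 1" m] by (simp add: truncate_def unit_vec_def)

lemma sqnorm_truncate:
  assumes "finite F" "F \<subseteq> MI n"
  shows "sqnorm n m (truncate F g) = (\<Sum>\<alpha>\<in>F. (cmod (g \<alpha>))\<^sup>2 / rho n m \<alpha>)"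
proof -
  have "sqnorm n m (truncate F g) = infsum (\<lambda>\<alpha>. (cmod (g \<alpha>))\<^sup>2 / rho n m \<alpha>) F"
    unfolding sqnorm_def truncate_def by (rule infsum_cong_neutral) (use assms in auto)
  thus ?thesis using assms by simp
qed

lemma sqnorm_diff_truncate:
  assumes g: "g \<in> Hm n m" and F: "finite F" "F \<subseteq> MI n"
  shows "sqnorm n m (\<lambda>\<beta>. g \<beta> - truncate F g \<beta>) = sqnorm n m g - (\<Sum>\<alpha>\<in>F. (cmod (g \<alpha>))\<^sup>2 / rho n m \<alpha>)"
proof -
  have "sqnorm n m (\<lambda>\<beta>. g \<beta> - truncate F g \<beta>) = infsum (\<lambda>\<alpha>. (cmod (g \<alpha>))\<^sup>2 / rho n m \<alpha>) (MI n - F)"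
    unfolding sqnorm_def truncate_def by (rule infsum_cong_neutral) auto
  thus ?thesis using infsum_split_finite[OF Hm_summable[OF g] F] by (simp add: sqnorm_def)
qed

definition riesz_rep :: "nat \<Rightarrow> nat \<Rightarrow> (hel \<Rightarrow> complex) \<Rightarrow> hel" where
  "riesz_rep n m \<phi> = (\<lambda>\<alpha>. if \<alpha> \<in> MI n then complex_of_real (rho n m \<alpha>) * \<phi> (unit_vec \<alpha>) else 0)"

context
  fixes n m :: nat and \<phi> :: "hel \<Rightarrow> complex" and B :: real
  assumes add: "\<And>g h. g \<in> Hm n m \<Longrightarrow> h \<in> Hm n m \<Longrightarrow> \<phi> (\<lambda>\<alpha>. g \<alpha> + h \<alpha>) = \<phi> g + \<phi> h"
    and scale: "\<And>c g. g \<in> Hm n m \<Longrightarrow> \<phi> (\<lambda>\<alpha>. c * g \<alpha>) = cnj c * \<phi> g"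
    and bound: "\<And>g. g \<in> Hm n m \<Longrightarrow> cmod (\<phi> g) \<le> B * sqrt (sqnorm n m g)"
begin

lemma antilinear_truncate:
  assumes F: "finite F" "F \<subseteq> MI n"
  shows "\<phi> (truncate F g) =
    (\<Sum>\<alpha>\<in>F. riesz_rep n m \<phi> \<alpha> * cnj (g \<alpha>) / complex_of_real (rho n m \<alpha>))"
proof -
  have "\<phi> (\<lambda>\<beta>. \<Sum>\<alpha>\<in>F. g \<alpha> * unit_vec \<alpha> \<beta>) = (\<Sum>\<alpha>\<in>F. cnj (g \<alpha>) * \<phi> (unit_vec \<alpha>))"
    using F
  proof (induction F rule: finite_induct)
    case empty
    show ?case using scale[OF Hm_zero, of 0] by simp
  next
    case (insert x F)
    have "(\<lambda>\<beta>. g x * unit_vec x \<beta>) \<in> Hm n m" "(\<lambda>\<beta>. \<Sum>\<alpha>\<in>F. g \<alpha> * unit_vec \<alpha> \<beta>) \<in> Hm n m"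
      using insert by (auto intro!: Hm_sum Hm_scale unit_vec_Hm)
    thus ?case using insert add scale unit_vec_Hm by simp
  qed
  also have "\<dots> = (\<Sum>\<alpha>\<in>F. riesz_rep n m \<phi> \<alpha> * cnj (g \<alpha>) / complex_of_real (rho n m \<alpha>))"
    using F by (intro sum.cong) (auto simp: riesz_rep_def field_simps subset_iff)
  finally show ?thesis using truncate_eq_sum[OF F(1)] by simp
qed

lemma sum_sqnorm_riesz_rep_le:
  assumes F: "finite F" "F \<subseteq> MI n"
  shows "(\<Sum>\<alpha>\<in>F. (cmod (riesz_rep n m \<phi> \<alpha>))\<^sup>2 / rho n m \<alpha>) \<le> B\<^sup>2"
proof -
  let ?h = "riesz_rep n m \<phi>"
  define S where "S = (\<Sum>\<alpha>\<in>F. (cmod (?h \<alpha>))\<^sup>2 / rho n m \<alpha>)"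
  have S0: "0 \<le> S" unfolding S_def by (intro sum_nonneg divide_nonneg_pos rho_pos) auto
  have "\<phi> (truncate F ?h) = (\<Sum>\<alpha>\<in>F. complex_of_real ((cmod (?h \<alpha>))\<^sup>2 / rho n m \<alpha>))"
    unfolding antilinear_truncate[OF F]
    by (rule sum.cong[OF refl]) (simp only: complex_norm_square[symmetric] of_real_divide)
  also have "\<dots> = complex_of_real S" unfolding S_def by (simp only: of_real_sum)
  finally have "S = cmod (\<phi> (truncate F ?h))" using S0 by simp
  also have "\<dots> \<le> B * sqrt S"
    using bound[OF truncate_Hm[OF F]] by (simp add: sqnorm_truncate[OF F] S_def)
  finally have sq: "sqrt S * sqrt S \<le> B * sqrt S" using S0 by simp
  show ?thesis
  proof (cases "S = 0")
    case False
    hence "sqrt S \<le> B" using mult_right_le_imp_le[OF sq] S0 by simp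
    hence "(sqrt S)\<^sup>2 \<le> B\<^sup>2" using S0 by (intro power_mono) auto
    thus ?thesis using S0 by (simp add: S_def)
  qed (simp add: S_def)
qed

lemma riesz_rep_Hm: "riesz_rep n m \<phi> \<in> Hm n m"
proof -
  have "(\<lambda>\<alpha>. (cmod (riesz_rep n m \<phi> \<alpha>))\<^sup>2 / rho n m \<alpha>) summable_on MI n"
    by (rule nonneg_bdd_above_summable_on)
      (auto intro!: divide_nonneg_pos rho_pos bdd_aboveI[where M="B\<^sup>2"] sum_sqnorm_riesz_rep_le)
  thus ?thesis by (auto simp: Hm_def riesz_rep_def)
qed

text \<open>Both sides are limits along the net of finite truncations of g.\<close>

lemma ipH_riesz_rep:
  assumes g: "g \<in> Hm n m"
  shows "ipH n m (riesz_rep n m \<phi>) g = \<phi> g"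
proof -
  let ?F = "finite_subsets_at_top (MI n)"
  let ?w = "\<lambda>\<alpha>. (cmod (g \<alpha>))\<^sup>2 / rho n m \<alpha>"
  have "((\<lambda>F. \<Sum>\<alpha>\<in>F. riesz_rep n m \<phi> \<alpha> * cnj (g \<alpha>) / complex_of_real (rho n m \<alpha>))
      \<longlongrightarrow> ipH n m (riesz_rep n m \<phi>) g) ?F"
    unfolding ipH_def by (rule infsum_tendsto[OF ipH_summable[OF riesz_rep_Hm g]])
  moreover have "\<forall>\<^sub>F F in ?F. \<phi> (truncate F g) =
      (\<Sum>\<alpha>\<in>F. riesz_rep n m \<phi> \<alpha> * cnj (g \<alpha>) / complex_of_real (rho n m \<alpha>))"
    by (rule eventually_finite_subsets_at_top_weakI) (rule antilinear_truncate)
  ultimately have lim1: "((\<lambda>F. \<phi> (truncate F g)) \<longlongrightarrow> ipH n m (riesz_rep n m \<phi>) g) ?F"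
    by (rule tendsto_cong[THEN iffD2, rotated])
  have "((\<lambda>F. sum ?w F) \<longlongrightarrow> sqnorm n m g) ?F"
    unfolding sqnorm_def by (rule infsum_tendsto[OF Hm_summable[OF g]])
  hence "((\<lambda>F. B * sqrt (sqnorm n m g - sum ?w F)) \<longlongrightarrow> B * sqrt (sqnorm n m g - sqnorm n m g)) ?F"
    by (intro tendsto_intros)
  hence limB: "((\<lambda>F. B * sqrt (sqnorm n m g - sum ?w F)) \<longlongrightarrow> 0) ?F" by simp
  have ev: "\<forall>\<^sub>F F in ?F. norm (\<phi> g - \<phi> (truncate F g)) \<le> B * sqrt (sqnorm n m g - sum ?w F)"
  proof (rule eventually_finite_subsets_at_top_weakI)
    fix F assume F: "finite F" "F \<subseteq> MI n"
    have gF: "truncate F g \<in> Hm n m" by (rule truncate_Hm[OF F])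
    have d: "(\<lambda>\<beta>. g \<beta> - truncate F g \<beta>) \<in> Hm n m" by (rule Hm_diff[OF g gF])
    have "\<phi> g = \<phi> (\<lambda>\<beta>. (g \<beta> - truncate F g \<beta>) + truncate F g \<beta>)" by simp
    also have "\<dots> = \<phi> (\<lambda>\<beta>. g \<beta> - truncate F g \<beta>) + \<phi> (truncate F g)" by (rule add[OF d gF])
    finally show "norm (\<phi> g - \<phi> (truncate F g)) \<le> B * sqrt (sqnorm n m g - sum ?w F)"
      using bound[OF d] sqnorm_diff_truncate[OF g F] by simp
  qed
  have "((\<lambda>F. \<phi> g - \<phi> (truncate F g)) \<longlongrightarrow> 0) ?F"
    by (rule Lim_null_comparison[OF ev limB])
  hence "((\<lambda>F. \<phi> g - (\<phi> g - \<phi> (truncate F g))) \<longlongrightarrow> \<phi> g - 0) ?F"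
    by (intro tendsto_intros)
  hence "((\<lambda>F. \<phi> (truncate F g)) \<longlongrightarrow> \<phi> g) ?F" by simp
  thus ?thesis by (rule tendsto_unique[OF finite_subsets_at_top_neq_bot lim1])
qed

end

section \<open>The Fourier coefficients T_k\<close>

lemma norm_integral_le_const:
  fixes F :: "real \<Rightarrow> complex"
  assumes "F integrable_on {0..2*pi}" and "\<And>t. cmod (F t) \<le> B"
  shows "cmod (integral {0..2*pi} F) \<le> B * (2*pi)"
proof -
  have B0: "0 \<le> B" using assms(2)[of 0] norm_ge_zero order_trans by blast
  have "(F has_integral integral {0..2*pi} F) (cbox 0 (2*pi))"
    using integrable_integral[OF assms(1)] by (simp add: cbox_interval)
  from has_integral_bound[OF B0 this] assms(2) show ?thesis by simp
qed

lemma sum_sum_mult_integral: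
  fixes Y :: "nat \<Rightarrow> nat \<Rightarrow> real \<Rightarrow> complex"
  assumes Y: "\<And>i j. i < n \<Longrightarrow> j < m \<Longrightarrow> Y i j integrable_on S"
  shows "(\<Sum>i<n. \<Sum>j<m. a j * (c * integral S (Y i j))) = c * integral S (\<lambda>t. \<Sum>i<n. \<Sum>j<m. a j * Y i j t)"
proof -
  have Y1: "(\<lambda>t. a j * Y i j t) integrable_on S" if "i < n" "j < m" for i j
    by (rule integrable_on_mult_right[OF Y[OF that]])
  have Y2: "(\<lambda>t. \<Sum>j<m. a j * Y i j t) integrable_on S" if "i < n" for i
    by (rule integrable_sum) (auto intro: Y1 that)
  have "integral S (\<lambda>t. \<Sum>i<n. \<Sum>j<m. a j * Y i j t) = (\<Sum>i<n. integral S (\<lambda>t. \<Sum>j<m. a j * Y i j t))"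
    by (rule integral_sum) (auto intro: Y2)
  also have "\<dots> = (\<Sum>i<n. \<Sum>j<m. integral S (\<lambda>t. a j * Y i j t))"
    by (rule sum.cong[OF refl], rule integral_sum) (auto intro: Y1)
  finally show ?thesis by (simp add: sum_distrib_left ac_simps)
qed

context
  fixes n m :: nat and T :: "hel \<Rightarrow> hel"
  assumes m: "1 \<le> m" and T: "bounded_op n m T"
begin

lemma Tk_ipH:
  assumes f: "f \<in> Hm n m"
  shows "Tk n m T k f \<in> Hm n m \<and> (\<forall>g\<in>Hm n m. ipH n m (Tk n m T k f) g = complex_of_real (1 / (2 * pi)) *
    integral {0..2*pi} (\<lambda>t. exp (- (\<i> * of_int k * of_real t)) * ipH n m (Uconj n m T t f) g))"
proof -
  obtain C where C: "\<And>f. f \<in> Hm n m \<Longrightarrow> sqnorm n m (T f) \<le> C * sqnorm n m f"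
    using bounded_op_sqnorm_le[OF T] by blast
  let ?e = "\<lambda>t. exp (- (\<i> * of_int k * of_real t))"
  define \<phi> where "\<phi> g = complex_of_real (1 / (2 * pi)) * integral {0..2*pi} (\<lambda>t. ?e t * ipH n m (Uconj n m T t f) g)" for g
  have W: "Uconj n m T t f \<in> Hm n m" for t
    using Uconj_Hm_closed[OF m bounded_op_Hm_closed[OF T]] f by (auto simp: Hm_closed_def)
  have int: "(\<lambda>t. ?e t * ipH n m (Uconj n m T t f) g) integrable_on {0..2*pi}" if "g \<in> Hm n m" for g
    using integrable_ipH_Uconj[where C=C, OF T C f that] by simp
  have e: "cmod (?e t) = 1" for t
  proof -
    have "?e t = exp (\<i> * of_real (- (real_of_int k * t)))" by (simp add: mult.assoc)
    thus ?thesis by (simp only: norm_exp_i_times)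
  qed
  have add: "\<phi> (\<lambda>\<alpha>. g \<alpha> + h \<alpha>) = \<phi> g + \<phi> h" if g: "g \<in> Hm n m" and h: "h \<in> Hm n m" for g h
    unfolding \<phi>_def ipH_add_right[OF g h W]
    by (simp add: distrib_left integral_add[OF int[OF g] int[OF h]] add_divide_distrib)
  have scale: "\<phi> (\<lambda>\<alpha>. c * g \<alpha>) = cnj c * \<phi> g" for c g
    unfolding \<phi>_def ipH_scale_right by (simp add: ac_simps)
  have bound: "cmod (\<phi> g) \<le> sqrt (C * sqnorm n m f) * sqrt (sqnorm n m g)" if g: "g \<in> Hm n m" for g
  proof -
    have "cmod (\<phi> g) = (1 / (2*pi)) * cmod (integral {0..2*pi} (\<lambda>t. ?e t * ipH n m (Uconj n m T t f) g))"
      unfolding \<phi>_def norm_mult norm_of_real by simp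
    also have "\<dots> \<le> (1 / (2*pi)) * (sqrt (C * sqnorm n m f) * sqrt (sqnorm n m g) * (2*pi))"
      by (intro mult_left_mono norm_integral_le_const[OF int[OF g]])
        (simp_all add: norm_mult e norm_ipH_Uconj_le[OF T C f g])
    finally show ?thesis by simp
  qed
  have "\<exists>h. h \<in> Hm n m \<and> (\<forall>g\<in>Hm n m. ipH n m h g = \<phi> g)"
    using riesz_rep_Hm[OF add scale bound] ipH_riesz_rep[OF add scale bound] by blast
  hence "Tk n m T k f \<in> Hm n m \<and> (\<forall>g\<in>Hm n m. ipH n m (Tk n m T k f) g = \<phi> g)"
    unfolding Tk_def \<phi>_def Uconj_def by (rule someI_ex)
  thus ?thesis unfolding \<phi>_def by simp
qed

lemma Tk_Hm_closed: "Hm_closed n m (Tk n m T k)"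
  using Tk_ipH by (auto simp: Hm_closed_def)

lemma sigma_pow_Tk_ipH:
  "\<forall>a\<in>Hm n m. \<forall>b\<in>Hm n m.
    (\<lambda>t. exp (- (\<i> * of_int k * of_real t)) * ipH n m ((sigma n m ^^ j) (Uconj n m T t) a) b)
      integrable_on {0..2*pi} \<and>
    ipH n m ((sigma n m ^^ j) (Tk n m T k) a) b = complex_of_real (1 / (2 * pi)) *
      integral {0..2*pi} (\<lambda>t. exp (- (\<i> * of_int k * of_real t)) * ipH n m ((sigma n m ^^ j) (Uconj n m T t) a) b)"
proof (induction j)
  case 0
  obtain C where C: "\<And>f. f \<in> Hm n m \<Longrightarrow> sqnorm n m (T f) \<le> C * sqnorm n m f"
    using bounded_op_sqnorm_le[OF T] by blast
  show ?case using Tk_ipH integrable_ipH_Uconj[OF T C] by simp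
next
  case (Suc j)
  show ?case
  proof (intro ballI)
    fix a b assume a: "a \<in> Hm n m" and b: "b \<in> Hm n m"
    let ?c = "complex_of_real (1 / (2 * pi))"
    let ?Y = "\<lambda>i t. exp (- (\<i> * of_int k * of_real t)) *
      ipH n m ((sigma n m ^^ j) (Uconj n m T t) (Mzi_star n m i a)) (Mzi_star n m i b)"
    have IH: "?Y i integrable_on {0..2*pi}"
      "ipH n m ((sigma n m ^^ j) (Tk n m T k) (Mzi_star n m i a)) (Mzi_star n m i b) = ?c * integral {0..2*pi} (?Y i)"
      if "i \<in> {..<n}" for i using Suc.IH Mzi_star_Hm[OF m _ a] Mzi_star_Hm[OF m _ b] that by auto
    have eq: "exp (- (\<i> * of_int k * of_real t)) * ipH n m ((sigma n m ^^ Suc j) (Uconj n m T t) a) b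
        = (\<Sum>i<n. ?Y i t)" for t
      using ipH_sigma[OF m sigma_pow_Hm_closed[OF m Uconj_Hm_closed[OF m bounded_op_Hm_closed[OF T]]] a b]
      by (simp add: sum_distrib_left)
    have "ipH n m ((sigma n m ^^ Suc j) (Tk n m T k) a) b = (\<Sum>i<n. ?c * integral {0..2*pi} (?Y i))"
      using ipH_sigma[OF m sigma_pow_Hm_closed[OF m Tk_Hm_closed] a b] IH(2) by simp
    also have "\<dots> = ?c * integral {0..2*pi} (\<lambda>t. \<Sum>i<n. ?Y i t)"
      by (subst integral_sum) (auto intro: IH(1) simp: sum_distrib_left)
    finally show "(\<lambda>t. exp (- (\<i> * of_int k * of_real t)) * ipH n m ((sigma n m ^^ Suc j) (Uconj n m T t) a) b)
        integrable_on {0..2*pi} \<and>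
      ipH n m ((sigma n m ^^ Suc j) (Tk n m T k) a) b = ?c * integral {0..2*pi}
        (\<lambda>t. exp (- (\<i> * of_int k * of_real t)) * ipH n m ((sigma n m ^^ Suc j) (Uconj n m T t) a) b)"
      unfolding eq by (auto intro: integrable_sum IH(1))
  qed
qed

lemma combo_form_Tk:
  assumes F: "F \<in> Hmn n m" and G: "G \<in> Hmn n m"
  shows "combo_form n m (Tk n m T k) F G = complex_of_real (1 / (2 * pi)) *
    integral {0..2*pi} (\<lambda>t. exp (- (\<i> * of_int k * of_real t)) * combo_form n m (Uconj n m T t) F G)"
proof -
  have FG: "F i \<in> Hm n m" "G i \<in> Hm n m" if "i < n" for i using F G that by (auto simp: Hmn_def)
  have "combo_form n m (Tk n m T k) F G = (\<Sum>i<n. \<Sum>j<m. combo_coeff m j * (complex_of_real (1 / (2 * pi)) *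
      integral {0..2*pi} (\<lambda>t. exp (- (\<i> * of_int k * of_real t)) * ipH n m ((sigma n m ^^ j) (Uconj n m T t) (F i)) (G i))))"
    unfolding combo_form_def using sigma_pow_Tk_ipH FG by (intro sum.cong refl arg_cong2[where f="(*)"]) auto
  also have "\<dots> = complex_of_real (1 / (2 * pi)) * integral {0..2*pi} (\<lambda>t. \<Sum>i<n. \<Sum>j<m. combo_coeff m j *
      (exp (- (\<i> * of_int k * of_real t)) * ipH n m ((sigma n m ^^ j) (Uconj n m T t) (F i)) (G i)))"
    by (rule sum_sum_mult_integral) (use sigma_pow_Tk_ipH FG in blast)
  finally show ?thesis by (simp add: combo_form_def sum_distrib_left ac_simps)
qed

lemma weak_identity_Tk:
  assumes W: "\<And>t. weak_identity n m (Uconj n m T t)"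
  shows "weak_identity n m (Tk n m T k)"
  unfolding weak_identity_def
proof (intro ballI)
  fix F G assume F: "F \<in> Hmn n m" and G: "G \<in> Hmn n m"
  have "ipH n m (Tk n m T k (Mz' n m F)) (Mz' n m G) = complex_of_real (1 / (2 * pi)) * integral {0..2*pi}
      (\<lambda>t. exp (- (\<i> * of_int k * of_real t)) * ipH n m (Uconj n m T t (Mz' n m F)) (Mz' n m G))"
    using Tk_ipH[OF Mz'_Hm[OF m F]] Mz'_Hm[OF m G] by blast
  also have "\<dots> = combo_form n m (Tk n m T k) (proj_Im n m F) (proj_Im n m G)"
    using W F G by (simp add: weak_identity_def combo_form_Tk[OF proj_Im_Hmn[OF m F] proj_Im_Hmn[OF m G]])
  finally show "ipH n m (Tk n m T k (Mz' n m F)) (Mz' n m G) =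
      combo_form n m (Tk n m T k) (proj_Im n m F) (proj_Im n m G)" .
qed

end

theorem lemma2:
  fixes n m :: nat and T :: "hel \<Rightarrow> hel"
  assumes "1 \<le> n" and "1 \<le> m"
    and "bounded_op n m T"
    and "\<forall>F\<in>Hmn n m. Mz'_adj n m (T (Mz' n m F)) =
           projIm n m (oplus n (combo n m T) (projIm n m F))"
  shows "\<forall>k::int. \<forall>F\<in>Hmn n m. Mz'_adj n m (Tk n m T k (Mz' n m F)) =
           projIm n m (oplus n (combo n m (Tk n m T k)) (projIm n m F))"
proof
  fix k :: int
  have T: "Hm_closed n m T" "Hm_homogeneous n m T"
    using assms(3) by (auto intro: bounded_op_Hm_closed bounded_op_Hm_homogeneous)
  have "weak_identity n m T"
    using assms(4) identity_iff_weak_identity[OF assms(2) T(1)] by simp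
  hence "weak_identity n m (Uconj n m T t)" for t
    by (rule weak_identity_Uconj[OF assms(2) T])
  hence "weak_identity n m (Tk n m T k)"
    by (rule weak_identity_Tk[OF assms(2,3)])
  thus "\<forall>F\<in>Hmn n m. Mz'_adj n m (Tk n m T k (Mz' n m F)) =
      projIm n m (oplus n (combo n m (Tk n m T k)) (projIm n m F))"
    using identity_iff_weak_identity[OF assms(2) Tk_Hm_closed[OF assms(2,3)]] by simp
qed

end
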